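(* There exist positive integers $c_{i,k}$, for all $i\ge0$ and $i+1\le k\le 2^i$, such that for all $n\ge1$, \[ b_i(\mathcal{A}_n)=\sum_{k=i+1}^{2^i} c_{i,k}\,S(n+1,k). \] Moreover, $c_{i,k}\le \binom{2^i-1}{k-1}\frac{(k-1)!}{i!}$.
   Context: For $n\ge1$, the resonance arrangement $\mathcal{A}_n$ is the arrangement in $\mathbb{R}^n$ of the hyperplanes $H_I=\{x:\sum_{i\in I}x_i=0\}$ for all nonempty $I\subseteq[n]$. For an arrangement $\mathcal{A}$ in $\mathbb{F}^n$, its characteristic polynomial is $\chi(\mathcal{A};t)=\sum_{S\subseteq\mathcal{A}}(-1)^{|S|}t^{r(\mathcal{A})-r(S)}$ where $r(S)=\operatorname{codim}\bigcap_{H\in S}H$, and the $i$-th Betti number $b_i(\mathcal{A})$ is the absolute value of the coefficient of $t^{n-i}$ in $\chi(\mathcal{A};t)$. $S(n,k)$ denotes the Stirling number of the second kind, the number of partitions of an $n$-element set into $k$ nonempty blocks. *)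

theory Defs
  imports "HOL-Analysis.Analysis" "HOL-Library.Function_Algebras"
          "HOL-Combinatorics.Stirling" "HOL-Computational_Algebra.Polynomial"
begin

text \<open>Vectors of R^n are modelled as functions nat => real supported on {1..n};
  the scalar multiplication is pointwise.\<close>

definition fscale :: "real \<Rightarrow> (nat \<Rightarrow> real) \<Rightarrow> (nat \<Rightarrow> real)" where
  "fscale c x = (\<lambda>j. c * x j)"

definition Rn :: "nat \<Rightarrow> (nat \<Rightarrow> real) set" where
  "Rn n = {x. \<forall>j. j \<notin> {1..n} \<longrightarrow> x j = 0}"

definition rk :: "nat \<Rightarrow> (nat \<Rightarrow> real) set set \<Rightarrow> nat" where
  "rk n S = n - vector_space.dim fscale (Rn n \<inter> \<Inter>S)"

definition char_poly :: "nat \<Rightarrow> (nat \<Rightarrow> real) set set \<Rightarrow> int poly" where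
  "char_poly n A = (\<Sum>S\<in>Pow A. (-1) ^ card S * monom 1 (rk n A - rk n S))"

definition betti :: "nat \<Rightarrow> (nat \<Rightarrow> real) set set \<Rightarrow> nat \<Rightarrow> nat" where
  "betti n A i = (if i \<le> n then nat \<bar>coeff (char_poly n A) (n - i)\<bar> else 0)"

definition hyp :: "nat \<Rightarrow> nat set \<Rightarrow> (nat \<Rightarrow> real) set" where
  "hyp n I = {x \<in> Rn n. (\<Sum>i\<in>I. x i) = 0}"

definition resonance :: "nat \<Rightarrow> (nat \<Rightarrow> real) set set" where
  "resonance n = {hyp n I | I. I \<subseteq> {1..n} \<and> I \<noteq> {}}"

end

theory Submission
  imports Defs "HOL-Combinatorics.Multiset_Permutations"
begin

interpretation fun_vs: vector_space fscale
  by unfold_locales (auto simp: fscale_def algebra_simps fun_eq_iff)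

lemma fscale_apply: "fscale c x j = c * x j"
  by (simp add: fscale_def)

lemma sum_fun_apply: "(\<Sum>i\<in>A. f i) j = (\<Sum>i\<in>A. f i j)" for f :: "'a \<Rightarrow> nat \<Rightarrow> real"
  by (induction A rule: infinite_finite_induct) auto

definition unit_vec :: "nat \<Rightarrow> nat \<Rightarrow> real" where
  "unit_vec p = (\<lambda>j. if j = p then 1 else 0)"

definition supported_on :: "nat set \<Rightarrow> (nat \<Rightarrow> real) set" where
  "supported_on M = {x. \<forall>j. j \<notin> M \<longrightarrow> x j = 0}"

lemma Rn_eq_supported_on: "Rn n = supported_on {1..n}"
  by (simp add: Rn_def supported_on_def)

lemma subspace_supported_on: "fun_vs.subspace (supported_on M)"
  unfolding fun_vs.subspace_def supported_on_def by (auto simp: zero_fun_def plus_fun_def fscale_apply)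

lemma unit_vec_in_supported_on: "p \<in> M \<Longrightarrow> unit_vec p \<in> supported_on M"
  by (simp add: unit_vec_def supported_on_def)

lemma sum_unit_vec: "finite S \<Longrightarrow> (\<Sum>j\<in>S. unit_vec p j) = (if p \<in> S then 1 else 0)"
  by (simp add: unit_vec_def)

lemma span_unit_vecs:
  assumes "finite M"
  shows "fun_vs.span (unit_vec ` M) = supported_on M"
proof
  show "supported_on M \<subseteq> fun_vs.span (unit_vec ` M)"
  proof
    fix x assume x: "x \<in> supported_on M"
    have "x = (\<Sum>p\<in>M. fscale (x p) (unit_vec p))"
    proof
      fix j
      have "(\<Sum>p\<in>M. fscale (x p) (unit_vec p)) j = (\<Sum>p\<in>M. if p = j then x p else 0)"
        unfolding sum_fun_apply fscale_apply by (rule sum.cong) (auto simp: unit_vec_def)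
      also have "\<dots> = x j" using x assms by (auto simp: supported_on_def)
      finally show "x j = (\<Sum>p\<in>M. fscale (x p) (unit_vec p)) j" by simp
    qed
    also have "\<dots> \<in> fun_vs.span (unit_vec ` M)"
      by (intro fun_vs.span_sum fun_vs.span_scale fun_vs.span_base) auto
    finally show "x \<in> fun_vs.span (unit_vec ` M)" .
  qed
  show "fun_vs.span (unit_vec ` M) \<subseteq> supported_on M"
    by (rule fun_vs.span_minimal[OF _ subspace_supported_on]) (auto intro: unit_vec_in_supported_on)
qed

lemma inj_unit_vec: "inj unit_vec"
  by (auto simp: inj_def unit_vec_def fun_eq_iff)

lemma independent_unit_vecs:
  assumes "finite M"
  shows "fun_vs.independent (unit_vec ` M)"
proof
  assume "fun_vs.dependent (unit_vec ` M)"
  then obtain u where u: "\<exists>v\<in>unit_vec ` M. u v \<noteq> 0" "(\<Sum>v\<in>unit_vec ` M. fscale (u v) v) = 0"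
    using fun_vs.dependent_finite[of "unit_vec ` M"] assms by blast
  then obtain p where p: "p \<in> M" "u (unit_vec p) \<noteq> 0" by auto
  have "(\<Sum>v\<in>unit_vec ` M. fscale (u v) v) p = (\<Sum>q\<in>M. u (unit_vec q) * unit_vec q p)"
    by (simp add: sum_fun_apply fscale_apply sum.reindex inj_on_subset[OF inj_unit_vec])
  also have "\<dots> = u (unit_vec p)"
    using p assms by (simp add: unit_vec_def if_distrib cong: if_cong)
  finally show False using u(2) p by simp
qed

lemma dim_supported_on:
  assumes "finite M"
  shows "fun_vs.dim (supported_on M) = card M"
proof -
  have "fun_vs.dim (supported_on M) = card (unit_vec ` M)"
    using fun_vs.dim_span_eq_card_independent[OF independent_unit_vecs[OF assms]]
    by (simp add: span_unit_vecs[OF assms])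
  also have "\<dots> = card M" by (rule card_image[OF inj_on_subset[OF inj_unit_vec]]) simp
  finally show ?thesis .
qed

lemma dim_Rn: "fun_vs.dim (Rn n) = n"
  by (simp add: Rn_eq_supported_on dim_supported_on)

lemma finite_basis_exists:
  assumes "finite M" "U \<subseteq> supported_on M"
  obtains B where "finite B" "B \<subseteq> U" "fun_vs.independent B" "U \<subseteq> fun_vs.span B"
    "card B = fun_vs.dim U"
proof -
  obtain B where B: "B \<subseteq> U" "fun_vs.independent B" "U \<subseteq> fun_vs.span B" "card B = fun_vs.dim U"
    using fun_vs.basis_exists by blast
  have "B \<subseteq> fun_vs.span (unit_vec ` M)" using B(1) assms span_unit_vecs by auto
  then have "finite B"
    using fun_vs.independent_span_bound[of "unit_vec ` M" B] B(2) assms(1) by auto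
  with B that show ?thesis by blast
qed

lemma dim_subset_supported_on:
  assumes "finite M" "U \<subseteq> W" "W \<subseteq> supported_on M"
  shows "fun_vs.dim U \<le> fun_vs.dim W"
proof -
  obtain B where "finite B" "B \<subseteq> W" "W \<subseteq> fun_vs.span B" "card B = fun_vs.dim W"
    using finite_basis_exists[OF assms(1,3)] by metis
  then show ?thesis using fun_vs.dim_le_card[of U B] assms(2) by auto
qed

lemma dim_le_card_support: "finite M \<Longrightarrow> U \<subseteq> supported_on M \<Longrightarrow> fun_vs.dim U \<le> card M"
  using dim_subset_supported_on[of M U "supported_on M"] dim_supported_on by simp

lemma dim_image_le:
  assumes add: "\<And>x y. L (x + y) = L x + L y" and scale: "\<And>c x. L (fscale c x) = fscale c (L x)"
    and "finite M" "X \<subseteq> supported_on M"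
  shows "fun_vs.dim (L ` X) \<le> fun_vs.dim X"
proof -
  obtain B where B: "finite B" "X \<subseteq> fun_vs.span B" "card B = fun_vs.dim X"
    using finite_basis_exists[OF assms(3,4)] by metis
  have "L 0 = 0" using scale[of 0 0] by (simp add: fscale_def zero_fun_def)
  then have sub: "fun_vs.subspace {x. L x \<in> fun_vs.span (L ` B)}"
    unfolding fun_vs.subspace_def using add scale
    by (auto intro: fun_vs.span_add fun_vs.span_scale fun_vs.span_zero)
  have "L x \<in> fun_vs.span (L ` B)" if "x \<in> fun_vs.span B" for x
    using that by (rule fun_vs.span_induct[OF _ sub]) (auto intro: fun_vs.span_base)
  then have "L ` X \<subseteq> fun_vs.span (L ` B)" using B(2) by blast
  then have "fun_vs.dim (L ` X) \<le> card (L ` B)" using fun_vs.dim_le_card B(1) by blast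
  also have "\<dots> \<le> card B" using B(1) by (rule card_image_le)
  finally show ?thesis using B(3) by simp
qed

definition subspace_in :: "nat set \<Rightarrow> (nat \<Rightarrow> real) set \<Rightarrow> bool" where
  "subspace_in M U \<longleftrightarrow> fun_vs.subspace U \<and> U \<subseteq> supported_on M"

lemma subspace_in_supported_on: "subspace_in M (supported_on M)"
  by (simp add: subspace_in_def subspace_supported_on)

lemma dim_Int_kernel:
  assumes add: "\<And>x y. \<phi> (x + y) = \<phi> x + \<phi> y" and scale: "\<And>c x. \<phi> (fscale c x) = c * \<phi> x"
    and "finite M" "subspace_in M U" "\<not> U \<subseteq> {x. \<phi> x = 0}"
  shows "fun_vs.dim (U \<inter> {x. \<phi> x = 0}) + 1 = fun_vs.dim U"
proof -
  let ?K = "U \<inter> {x. \<phi> x = 0}"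
  have U: "fun_vs.subspace U" "U \<subseteq> supported_on M" using assms(4) by (auto simp: subspace_in_def)
  have "\<phi> 0 = 0" using scale[of 0 0] by (simp add: fscale_def zero_fun_def)
  then have K: "fun_vs.subspace ?K"
    using U(1) unfolding fun_vs.subspace_def by (auto simp: add scale)
  obtain w where w: "w \<in> U" "\<phi> w \<noteq> 0" using assms(5) by auto
  obtain B where B: "finite B" "B \<subseteq> ?K" "fun_vs.independent B" "?K \<subseteq> fun_vs.span B"
      "card B = fun_vs.dim ?K"
    by (rule finite_basis_exists[of M ?K]) (use assms(3) U(2) in auto)
  have wB: "w \<notin> fun_vs.span B" using fun_vs.span_minimal[OF B(2) K] w by auto
  have "U \<subseteq> fun_vs.span (insert w B)"
  proof
    fix u assume u: "u \<in> U"
    \<comment> \<open>subtracting the right multiple of w lands in the kernel\<close>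
    define c where "c = \<phi> u / \<phi> w"
    have "\<phi> u = \<phi> (u - fscale c w) + \<phi> (fscale c w)" by (metis add diff_add_cancel)
    then have "\<phi> (u - fscale c w) = 0" using w(2) by (simp add: scale c_def)
    moreover have "u - fscale c w \<in> U"
      using u w U(1) by (simp add: fun_vs.subspace_diff fun_vs.subspace_scale)
    ultimately have "u - fscale c w \<in> ?K" by simp
    then have "u - fscale c w \<in> fun_vs.span (insert w B)"
      using B(4) fun_vs.span_mono[of B "insert w B"] by auto
    moreover have "fscale c w \<in> fun_vs.span (insert w B)"
      by (intro fun_vs.span_scale fun_vs.span_base) simp
    ultimately have "(u - fscale c w) + fscale c w \<in> fun_vs.span (insert w B)"
      by (rule fun_vs.span_add)
    then show "u \<in> fun_vs.span (insert w B)" by simp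
  qed
  then have "fun_vs.span U \<subseteq> fun_vs.span (insert w B)"
    by (rule fun_vs.span_minimal[OF _ fun_vs.subspace_span])
  moreover have "fun_vs.span (insert w B) \<subseteq> fun_vs.span U"
    using B(2) w(1) by (intro fun_vs.span_mono) auto
  moreover have "fun_vs.independent (insert w B)"
    using B(3) wB by (simp add: fun_vs.independent_insert)
  ultimately have "fun_vs.dim U = card (insert w B)"
    using fun_vs.dim_eq_card[of "insert w B" U] by simp
  also have "\<dots> = card B + 1" using B(1) wB fun_vs.span_base[of w B] by (auto simp: card_insert_if)
  finally show ?thesis using B(5) by simp
qed

definition hyperplane_like :: "nat set \<Rightarrow> (nat \<Rightarrow> real) set \<Rightarrow> bool" where
  "hyperplane_like M h \<longleftrightarrow> (\<forall>U. subspace_in M U \<longrightarrow>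
     subspace_in M (U \<inter> h) \<and> (U \<subseteq> h \<or> fun_vs.dim (U \<inter> h) + 1 = fun_vs.dim U))"

definition sum_kernel :: "nat set \<Rightarrow> (nat \<Rightarrow> real) set" where
  "sum_kernel S = {x. (\<Sum>j\<in>S. x j) = 0}"

lemma hyperplane_like_sum_kernel:
  assumes "finite M"
  shows "hyperplane_like M (sum_kernel S)"
  unfolding hyperplane_like_def
proof (intro allI impI conjI)
  fix U assume U: "subspace_in M U"
  show "subspace_in M (U \<inter> sum_kernel S)"
    using U unfolding subspace_in_def fun_vs.subspace_def sum_kernel_def
    by (auto simp: sum.distrib sum_distrib_left[symmetric] fscale_apply)
  show "U \<subseteq> sum_kernel S \<or> fun_vs.dim (U \<inter> sum_kernel S) + 1 = fun_vs.dim U"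
    using dim_Int_kernel[of "\<lambda>x. \<Sum>j\<in>S. x j", OF _ _ assms U]
    by (auto simp: sum_kernel_def sum.distrib sum_distrib_left fscale_apply)
qed

lemma sum_Pow_alternating:
  assumes "finite C" "C \<noteq> {}"
  shows "(\<Sum>T\<in>Pow C. (-1::int) ^ card T) = 0"
proof (rule sum_alternating_cancels)
  have "card {T. T \<subseteq> C \<and> {} \<subseteq> T \<and> even (card T)} = card {T. T \<subseteq> C \<and> {} \<subseteq> T \<and> odd (card T)}"
    using assms by (intro card_subsupersets_even_odd) auto
  then show "card {T. T \<in> Pow C \<and> even (card T)} = card {T. T \<in> Pow C \<and> odd (card T)}"
    by simp
qed (use assms in simp)

lemma sum_Pow_split:
  assumes "C \<subseteq> E"
  shows "(\<Sum>S\<in>Pow E. g S) = (\<Sum>A\<in>Pow (E - C). \<Sum>T\<in>Pow C. g (A \<union> T))"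
proof -
  have "bij_betw (\<lambda>(A, T). A \<union> T) (Pow (E - C) \<times> Pow C) (Pow E)"
    by (rule bij_betw_byWitness[where f' = "\<lambda>S. (S - C, S \<inter> C)"]) (use assms in auto)
  then have "(\<Sum>S\<in>Pow E. g S) = (\<Sum>(A, T)\<in>Pow (E - C) \<times> Pow C. g (A \<union> T))"
    by (simp add: sum.reindex_bij_betw[symmetric] split_def)
  then show ?thesis by (simp add: sum.cartesian_product)
qed

locale flat_family =
  fixes M :: "nat set" and f :: "'e \<Rightarrow> (nat \<Rightarrow> real) set" and P :: "(nat \<Rightarrow> real) set \<Rightarrow> bool"
  assumes finite_M: "finite M" and hyperplane_like_f: "\<And>e. hyperplane_like M (f e)"
begin

definition flat_of :: "(nat \<Rightarrow> real) set \<Rightarrow> 'e set \<Rightarrow> (nat \<Rightarrow> real) set" where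
  "flat_of W S = W \<inter> \<Inter>(f ` S)"

definition signed_count :: "(nat \<Rightarrow> real) set \<Rightarrow> 'e set \<Rightarrow> nat \<Rightarrow> int" where
  "signed_count W E j =
     (\<Sum>S\<in>Pow E. if P (flat_of W S) \<and> fun_vs.dim (flat_of W S) = j then (-1) ^ card S else 0)"

definition indep_count :: "(nat \<Rightarrow> real) set \<Rightarrow> 'e set \<Rightarrow> nat \<Rightarrow> nat" where
  "indep_count W E j = card {T\<in>Pow E. P (flat_of W T) \<and> fun_vs.dim (flat_of W T) = j \<and>
     card T + j = fun_vs.dim W}"

lemma flat_of_empty [simp]: "flat_of W {} = W"
  by (simp add: flat_of_def)

lemma flat_of_insert: "flat_of W (insert e S) = flat_of (W \<inter> f e) S"
  by (auto simp: flat_of_def)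

lemma flat_of_insert_Int: "flat_of W (insert e S) = flat_of W S \<inter> f e"
  by (auto simp: flat_of_def)

lemma subspace_in_Int: "subspace_in M W \<Longrightarrow> subspace_in M (W \<inter> f e)"
  using hyperplane_like_f[of e] unfolding hyperplane_like_def by blast

lemma dim_Int_Suc: "subspace_in M W \<Longrightarrow> \<not> W \<subseteq> f e \<Longrightarrow> fun_vs.dim (W \<inter> f e) + 1 = fun_vs.dim W"
  using hyperplane_like_f[of e] unfolding hyperplane_like_def by blast

lemma subspace_in_flat_of: "finite S \<Longrightarrow> subspace_in M W \<Longrightarrow> subspace_in M (flat_of W S)"
  by (induction S rule: finite_induct) (auto simp: flat_of_insert_Int subspace_in_Int)

lemma dim_flat_of_le: "subspace_in M W \<Longrightarrow> fun_vs.dim (flat_of W S) \<le> fun_vs.dim W"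
  using dim_subset_supported_on[OF finite_M] by (auto simp: flat_of_def subspace_in_def)

lemma dim_le_dim_flat_of_add_card:
  assumes "finite T" "subspace_in M W"
  shows "fun_vs.dim W \<le> fun_vs.dim (flat_of W T) + card T"
  using assms
proof (induction T rule: finite_induct)
  case (insert e T)
  have "fun_vs.dim (flat_of W T) \<le> fun_vs.dim (flat_of W (insert e T)) + 1"
    using dim_Int_Suc[OF subspace_in_flat_of[OF insert(1,4)], of e]
    by (cases "flat_of W T \<subseteq> f e") (auto simp: flat_of_insert_Int Int_absorb2)
  then show ?case using insert by auto
qed simp

lemma signed_count_empty: "signed_count W {} j = (if P W \<and> fun_vs.dim W = j then 1 else 0)"
  unfolding signed_count_def Pow_empty by simp

lemma indep_count_empty: "indep_count W {} j = (if P W \<and> fun_vs.dim W = j then 1 else 0)"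
proof -
  have "{T\<in>Pow {}. P (flat_of W T) \<and> fun_vs.dim (flat_of W T) = j \<and> card T + j = fun_vs.dim W} =
      (if P W \<and> fun_vs.dim W = j then {{}} else {})"
    by auto
  then show ?thesis by (simp add: indep_count_def)
qed

lemma signed_count_eq_0:
  assumes "subspace_in M W" "fun_vs.dim W < j"
  shows "signed_count W E j = 0"
  unfolding signed_count_def
proof (intro sum.neutral ballI)
  fix S
  show "(if P (flat_of W S) \<and> fun_vs.dim (flat_of W S) = j then (-1) ^ card S else 0) = 0"
    using dim_flat_of_le[OF assms(1), of S] assms(2) by auto
qed

lemma signed_count_deletion_restriction:
  assumes "finite E" "C \<subseteq> E" "C \<noteq> {}" "\<And>c. c \<in> C \<Longrightarrow> W \<inter> f c = U"
  shows "signed_count W E j = signed_count W (E - C) j - signed_count U (E - C) j"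
proof -
  define g where "g X S = (if P (flat_of X S) \<and> fun_vs.dim (flat_of X S) = j then (-1::int) ^ card S else 0)"
    for X S
  have fC: "finite C" using assms(1,2) finite_subset by blast
  have "(\<Sum>T\<in>Pow C. g W (A \<union> T)) = g W A - g U A" if A: "A \<in> Pow (E - C)" for A
  proof -
    have "g W (A \<union> T) = g U A * (-1) ^ card T" if T: "T \<in> Pow C - {{}}" for T
    proof -
      \<comment> \<open>every element of a nonempty T \<subseteq> C cuts W down to the same U\<close>
      have "flat_of W (A \<union> T) = flat_of U A"
        using T assms(4) by (auto simp: flat_of_def)
      moreover have "card (A \<union> T) = card A + card T"
        using A T assms(1) fC finite_subset by (intro card_Un_disjoint) auto
      ultimately show ?thesis by (simp add: g_def power_add)
    qed
    then have "(\<Sum>T\<in>Pow C - {{}}. g W (A \<union> T)) = (\<Sum>T\<in>Pow C - {{}}. g U A * (-1) ^ card T)"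
      by (intro sum.cong) auto
    also have "\<dots> = g U A * ((\<Sum>T\<in>Pow C. (-1) ^ card T) - 1)"
      using fC by (simp add: sum_diff1 right_diff_distrib flip: sum_distrib_left)
    also have "\<dots> = - g U A" using sum_Pow_alternating[OF fC assms(3)] by simp
    finally show ?thesis using fC by (simp add: sum.remove[of "Pow C" "{}"])
  qed
  then have "(\<Sum>A\<in>Pow (E - C). \<Sum>T\<in>Pow C. g W (A \<union> T)) = (\<Sum>A\<in>Pow (E - C). g W A - g U A)"
    by (intro sum.cong) auto
  moreover have "signed_count W E j = (\<Sum>S\<in>Pow E. g W S)"
    by (simp add: signed_count_def g_def)
  ultimately show ?thesis
    by (simp add: sum_Pow_split[OF assms(2)] sum_subtractf signed_count_def g_def)
qed

lemma signed_count_parallel_deletion: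
  fixes W :: "(nat \<Rightarrow> real) set"
  assumes "finite E" "e \<in> E"
  defines "E' \<equiv> {c\<in>E. W \<inter> f c \<noteq> W \<inter> f e}"
  shows "card E' < card E"
    and "signed_count W E j = signed_count W E' j - signed_count (W \<inter> f e) E' j"
proof -
  have E': "E' = E - {c\<in>E. W \<inter> f c = W \<inter> f e}" by (auto simp: E'_def)
  show "card E' < card E" using assms by (intro psubset_card_mono) (auto simp: E'_def)
  show "signed_count W E j = signed_count W E' j - signed_count (W \<inter> f e) E' j"
    unfolding E' using assms by (intro signed_count_deletion_restriction) auto
qed

lemma signed_count_sign:
  assumes "finite E" "subspace_in M W"
  shows "0 \<le> (-1) ^ (fun_vs.dim W + j) * signed_count W E j"
  using assms
proof (induction "card E" arbitrary: E W rule: less_induct)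
  case less
  show ?case
  proof (cases "E = {}")
    case True
    then show ?thesis by (simp add: signed_count_empty)
  next
    case False
    then obtain e where e: "e \<in> E" by auto
    define E' where "E' = {c\<in>E. W \<inter> f c \<noteq> W \<inter> f e}"
    note split = signed_count_parallel_deletion[OF less.prems(1) e, of W, folded E'_def]
    have IH: "0 \<le> (-1) ^ (fun_vs.dim V + j) * signed_count V E' j" if "subspace_in M V" for V
      using less.hyps[OF split(1)] less.prems(1) that by (simp add: E'_def)
    show ?thesis
    proof (cases "W \<subseteq> f e")
      case True
      then show ?thesis using split(2)[of j] by (simp add: Int_absorb2)
    next
      case False
      define s :: int where "s = (-1) ^ (fun_vs.dim (W \<inter> f e) + j)"
      have "fun_vs.dim W + j = Suc (fun_vs.dim (W \<inter> f e) + j)"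
        using dim_Int_Suc[OF less.prems(2) False] by simp
      then have "(-1) ^ (fun_vs.dim W + j) = - s" by (simp add: s_def)
      then have "(-1) ^ (fun_vs.dim W + j) * signed_count W E j =
          s * signed_count (W \<inter> f e) E' j - s * signed_count W E' j"
        using split(2)[of j] by (simp add: right_diff_distrib)
      moreover have "0 \<le> s * signed_count (W \<inter> f e) E' j"
        using IH[OF subspace_in_Int[OF less.prems(2)]] by (simp add: s_def)
      moreover have "0 \<le> - s * signed_count W E' j"
        using IH[OF less.prems(2)] \<open>(-1) ^ (fun_vs.dim W + j) = - s\<close> by simp
      ultimately show ?thesis by simp
    qed
  qed
qed

lemma abs_signed_count_parallel_deletion:
  fixes W :: "(nat \<Rightarrow> real) set"
  assumes "finite E" "e \<in> E" "subspace_in M W" "\<not> W \<subseteq> f e"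
  defines "E' \<equiv> {c\<in>E. W \<inter> f c \<noteq> W \<inter> f e}"
  shows "\<bar>signed_count W E j\<bar> = \<bar>signed_count W E' j\<bar> + \<bar>signed_count (W \<inter> f e) E' j\<bar>"
proof -
  define s :: int where "s = (-1) ^ (fun_vs.dim W + j)"
  define U where "U = W \<inter> f e"
  have fE': "finite E'" using assms(1) by (simp add: E'_def)
  have abs_s: "\<bar>s * x\<bar> = \<bar>x\<bar>" for x by (simp add: s_def abs_mult)
  have "fun_vs.dim W = fun_vs.dim U + 1" using dim_Int_Suc[OF assms(3,4)] by (simp add: U_def)
  \<comment> \<open>the two terms of the deletion-restriction formula have the same sign\<close>
  then have W': "0 \<le> s * signed_count W E' j" and U': "0 \<le> s * - signed_count U E' j"
    using signed_count_sign[OF fE' assms(3)] signed_count_sign[OF fE' subspace_in_Int[OF assms(3)]]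
    by (simp_all add: s_def U_def)
  have "\<bar>signed_count W E j\<bar> = \<bar>s * signed_count W E j\<bar>" by (simp only: abs_s)
  also have "\<dots> = \<bar>s * signed_count W E' j + s * - signed_count U E' j\<bar>"
    using signed_count_parallel_deletion(2)[OF assms(1,2), of W j]
    by (simp add: E'_def U_def right_diff_distrib)
  also have "\<dots> = \<bar>s * signed_count W E' j\<bar> + \<bar>s * - signed_count U E' j\<bar>"
    using W' U' by simp
  finally show ?thesis by (simp only: abs_s abs_minus_cancel U_def)
qed

lemma indep_count_deletion_restriction:
  assumes "finite E" "e \<in> E" "E' \<subseteq> E - {e}" "U = W \<inter> f e" "fun_vs.dim U + 1 = fun_vs.dim W"
  shows "indep_count W E' j + indep_count U E' j \<le> indep_count W E j"
proof -
  let ?S = "\<lambda>X F. {T\<in>Pow F. P (flat_of X T) \<and> fun_vs.dim (flat_of X T) = j \<and> card T + j = fun_vs.dim X}"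
  have fE': "finite E'" using assms(1,3) finite_subset by blast
  have inj: "inj_on (insert e) (?S U E')"
  proof (rule inj_onI)
    fix A B assume "A \<in> ?S U E'" "B \<in> ?S U E'" "insert e A = insert e B"
    moreover have "e \<notin> A" "e \<notin> B" using calculation(1,2) assms(3) by auto
    ultimately show "A = B" by (metis Diff_insert_absorb)
  qed
  have sub: "insert e ` ?S U E' \<subseteq> ?S W E"
  proof
    fix X assume "X \<in> insert e ` ?S U E'"
    then obtain T where T: "T \<in> ?S U E'" "X = insert e T" by auto
    have "e \<notin> T" "finite T" using T(1) assms(3) fE' finite_subset by auto
    then show "X \<in> ?S W E" using T assms by (auto simp: flat_of_insert)
  qed
  have fin: "finite (?S W E)" using assms(1) by simp
  have "?S W E' \<subseteq> ?S W E" using assms(3) by auto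
  then have "card (?S W E') + card (insert e ` ?S U E') = card (?S W E' \<union> insert e ` ?S U E')"
    using sub fin assms(3) by (intro card_Un_disjoint[symmetric]) (auto intro: finite_subset)
  also have "\<dots> \<le> card (?S W E)"
    using sub fin \<open>?S W E' \<subseteq> ?S W E\<close> by (intro card_mono) auto
  finally show ?thesis unfolding indep_count_def card_image[OF inj] .
qed

lemma abs_signed_count_le:
  assumes "finite E" "subspace_in M W"
  shows "\<bar>signed_count W E j\<bar> \<le> int (indep_count W E j)"
  using assms
proof (induction "card E" arbitrary: E W rule: less_induct)
  case less
  show ?case
  proof (cases "E = {}")
    case True
    then show ?thesis by (simp add: signed_count_empty indep_count_empty)
  next
    case False
    then obtain e where e: "e \<in> E" by auto
    define E' where "E' = {c\<in>E. W \<inter> f c \<noteq> W \<inter> f e}"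
    note split = signed_count_parallel_deletion[OF less.prems(1) e, of W, folded E'_def]
    have IH: "\<bar>signed_count V E' j\<bar> \<le> int (indep_count V E' j)" if "subspace_in M V" for V
      using less.hyps[OF split(1)] less.prems(1) that by (simp add: E'_def)
    show ?thesis
    proof (cases "W \<subseteq> f e")
      case True
      then show ?thesis using split(2)[of j] by (simp add: Int_absorb2)
    next
      case False
      have "indep_count W E' j + indep_count (W \<inter> f e) E' j \<le> indep_count W E j"
        using dim_Int_Suc[OF less.prems(2) False]
        by (intro indep_count_deletion_restriction[OF less.prems(1) e]) (auto simp: E'_def)
      then have "int (indep_count W E' j) + int (indep_count (W \<inter> f e) E' j) \<le> int (indep_count W E j)"
        by linarith
      then show ?thesis
        using abs_signed_count_parallel_deletion[OF less.prems(1) e less.prems(2) False, of j]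
          IH[OF less.prems(2)] IH[OF subspace_in_Int[OF less.prems(2)], of e]
        unfolding E'_def by linarith
    qed
  qed
qed

lemma restriction_not_subset:
  assumes "subspace_in M W" "\<not> W \<subseteq> f e" "\<not> W \<subseteq> f e'" "W \<inter> f e' \<noteq> W \<inter> f e"
  shows "\<not> W \<inter> f e \<subseteq> f e'"
proof
  assume sub: "W \<inter> f e \<subseteq> f e'"
  then have eq: "(W \<inter> f e') \<inter> f e = W \<inter> f e" by auto
  have "fun_vs.dim (W \<inter> f e) = fun_vs.dim (W \<inter> f e')"
    using dim_Int_Suc[OF assms(1,2)] dim_Int_Suc[OF assms(1,3)] by simp
  then show False
    using dim_Int_Suc[OF subspace_in_Int[OF assms(1)], of e' e] eq assms(4)
    by (cases "W \<inter> f e' \<subseteq> f e") (auto simp: Int_absorb2)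
qed

lemma independent_no_parallel:
  assumes "finite T" "subspace_in M W" "card T + fun_vs.dim (flat_of W T) = fun_vs.dim W"
    "c \<in> T" "c' \<in> T" "c \<noteq> c'" "W \<inter> f c' = W \<inter> f c"
  shows False
proof -
  \<comment> \<open>c' is redundant in T, so T cannot cut down the dimension by card T\<close>
  have "flat_of W T = flat_of W (T - {c'})"
    using assms(4-7) by (auto simp: flat_of_def)
  moreover have "card (T - {c'}) + 1 = card T" using assms(1,5) by (metis Suc_eq_plus1 card_Suc_Diff1)
  ultimately show False
    using dim_le_dim_flat_of_add_card[of "T - {c'}" W] assms(1-3) by simp
qed

lemma signed_count_neq_0:
  assumes "finite E" "subspace_in M W" "\<forall>e\<in>E. \<not> W \<subseteq> f e"
    "T \<subseteq> E" "P (flat_of W T)" "card T + fun_vs.dim (flat_of W T) = fun_vs.dim W"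
  shows "signed_count W E (fun_vs.dim (flat_of W T)) \<noteq> 0"
  using assms
proof (induction "card E" arbitrary: E W T rule: less_induct)
  case less
  show ?case
  proof (cases "E = {}")
    case True
    then show ?thesis using less.prems(4,5) by (simp add: signed_count_empty)
  next
    case False
    then obtain e where e: "e \<in> E" by auto
    define U where "U = W \<inter> f e"
    define E' where "E' = {c\<in>E. W \<inter> f c \<noteq> U}"
    define j where "j = fun_vs.dim (flat_of W T)"
    have card_E': "card E' < card E" and fE': "finite E'"
      using signed_count_parallel_deletion(1)[OF less.prems(1) e] less.prems(1)
      by (simp_all add: E'_def U_def)
    have fT: "finite T" using less.prems(1,4) finite_subset by blast
    have U: "subspace_in M U" "fun_vs.dim U + 1 = fun_vs.dim W"
      using subspace_in_Int[OF less.prems(2)] dim_Int_Suc[OF less.prems(2)] less.prems(3) e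
      by (simp_all add: U_def)
    have "signed_count W E' j \<noteq> 0 \<or> signed_count U E' j \<noteq> 0"
    proof (cases "\<exists>c\<in>T. W \<inter> f c = U")
      case False
      then have "T \<subseteq> E'" using less.prems(4) by (auto simp: E'_def)
      then show ?thesis
        using less.hyps[OF card_E' fE' less.prems(2) _ _ less.prems(5,6)] less.prems(3)
        by (auto simp: E'_def j_def)
    next
      case True
      then obtain c where c: "c \<in> T" "W \<inter> f c = U" by blast
      define T' where "T' = T - {c}"
      have flat: "flat_of W T = flat_of U T'"
        using c by (metis T'_def flat_of_insert insert_Diff)
      have card: "card T = card T' + 1" using fT c unfolding T'_def by (metis Suc_eq_plus1 card_Suc_Diff1)
      have "T' \<subseteq> E'"
      proof
        fix c' assume c': "c' \<in> T'"
        then have "W \<inter> f c' \<noteq> W \<inter> f c"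
          using independent_no_parallel[OF fT less.prems(2,6) c(1)] by (auto simp: T'_def)
        then show "c' \<in> E'" using c' c(2) less.prems(4) by (auto simp: E'_def T'_def)
      qed
      moreover have "\<forall>e'\<in>E'. \<not> U \<subseteq> f e'"
        using restriction_not_subset[OF less.prems(2)] less.prems(3) e by (auto simp: E'_def U_def)
      moreover have "card T' + fun_vs.dim (flat_of U T') = fun_vs.dim U"
        using less.prems(6) flat card U(2) by simp
      ultimately have "signed_count U E' (fun_vs.dim (flat_of U T')) \<noteq> 0"
        using less.hyps[OF card_E' fE' U(1)] less.prems(5) flat by simp
      then show ?thesis by (simp add: j_def flat)
    qed
    then show ?thesis
      using abs_signed_count_parallel_deletion[OF less.prems(1) e less.prems(2), of j] less.prems(3) e
      by (auto simp: j_def E'_def U_def)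
  qed
qed

end

definition separating :: "'a set \<Rightarrow> 'a set set \<Rightarrow> bool" where
  "separating M G \<longleftrightarrow> (\<forall>p\<in>M. \<exists>S\<in>G. p \<in> S) \<and>
     (\<forall>p\<in>M. \<forall>q\<in>M. p \<noteq> q \<longrightarrow> (\<exists>S\<in>G. (p \<in> S) \<noteq> (q \<in> S)))"

definition sep_families :: "'a set \<Rightarrow> 'a set set set" where
  "sep_families M = {G. G \<subseteq> Pow M - {{}} \<and> separating M G}"

definition zero_sum_space :: "nat set \<Rightarrow> nat set set \<Rightarrow> (nat \<Rightarrow> real) set" where
  "zero_sum_space M G = supported_on M \<inter> \<Inter>(sum_kernel ` G)"

definition sep_sum :: "nat \<Rightarrow> nat set \<Rightarrow> int" where
  "sep_sum i M = (\<Sum>G\<in>sep_families M.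
     if fun_vs.dim (zero_sum_space M G) + i = card M then (-1) ^ card G else 0)"

definition avoids_roots :: "nat set \<Rightarrow> (nat \<Rightarrow> real) set \<Rightarrow> bool" where
  "avoids_roots M X \<longleftrightarrow> (\<forall>p\<in>M. unit_vec p \<notin> X) \<and>
     (\<forall>p\<in>M. \<forall>q\<in>M. p \<noteq> q \<longrightarrow> unit_vec p - unit_vec q \<notin> X)"

lemma finite_sep_families: "finite M \<Longrightarrow> finite (sep_families M)"
  by (rule finite_subset[of _ "Pow (Pow M)"]) (auto simp: sep_families_def)

lemma unit_vec_in_sum_kernel: "finite S \<Longrightarrow> unit_vec p \<in> sum_kernel S \<longleftrightarrow> p \<notin> S"
  by (simp add: sum_kernel_def sum_unit_vec)

lemma unit_vec_diff_in_sum_kernel: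
  "finite S \<Longrightarrow> unit_vec p - unit_vec q \<in> sum_kernel S \<longleftrightarrow> (p \<in> S \<longleftrightarrow> q \<in> S)"
  by (simp add: sum_kernel_def sum_subtractf sum_unit_vec)

lemma separating_iff_avoids_roots:
  assumes "finite M" "G \<subseteq> Pow M"
  shows "separating M G \<longleftrightarrow> avoids_roots M (zero_sum_space M G)"
proof -
  have fin: "finite S" if "S \<in> G" for S using that assms finite_subset by blast
  have "unit_vec p - unit_vec q \<in> supported_on M" if "p \<in> M" "q \<in> M" for p q
    using that by (simp add: supported_on_def unit_vec_def)
  then show ?thesis
    unfolding separating_def avoids_roots_def zero_sum_space_def
    using fin unit_vec_in_supported_on
    by (auto simp: unit_vec_in_sum_kernel unit_vec_diff_in_sum_kernel)
qed

lemma sep_sum_eq_0: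
  assumes "finite M" "card M < i"
  shows "sep_sum i M = 0"
  unfolding sep_sum_def using assms(2) by (intro sum.neutral) auto

context
  fixes M :: "nat set"
  assumes finite_M: "finite M"
begin

interpretation flat_family M sum_kernel "avoids_roots M"
  by unfold_locales (simp_all add: finite_M hyperplane_like_sum_kernel)

lemma flat_of_supported_on: "flat_of (supported_on M) G = zero_sum_space M G"
  by (simp add: flat_of_def zero_sum_space_def)

lemma subspace_in_zero_sum_space: "finite G \<Longrightarrow> subspace_in M (zero_sum_space M G)"
  using subspace_in_flat_of[OF _ subspace_in_supported_on] by (simp add: flat_of_supported_on)

lemma dim_zero_sum_space_insert:
  assumes "finite G" "\<not> zero_sum_space M G \<subseteq> sum_kernel S"
  shows "fun_vs.dim (zero_sum_space M (insert S G)) + 1 = fun_vs.dim (zero_sum_space M G)"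
  using dim_Int_Suc[OF subspace_in_zero_sum_space[OF assms(1)] assms(2)]
  by (simp add: zero_sum_space_def Int_ac)

lemma sep_sum_eq_signed_count:
  assumes "i \<le> card M"
  shows "sep_sum i M = signed_count (supported_on M) (Pow M - {{}}) (card M - i)"
proof -
  have sf: "sep_families M = {G \<in> Pow (Pow M - {{}}). separating M G}"
    by (auto simp: sep_families_def)
  have "sep_sum i M = (\<Sum>G\<in>Pow (Pow M - {{}}). if separating M G then
      (if fun_vs.dim (zero_sum_space M G) + i = card M then (-1) ^ card G else 0) else 0)"
    unfolding sep_sum_def sf by (rule sum.inter_filter) (simp add: finite_M)
  also have "\<dots> = signed_count (supported_on M) (Pow M - {{}}) (card M - i)"
    unfolding signed_count_def flat_of_supported_on
  proof (intro sum.cong refl)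
    fix G assume G: "G \<in> Pow (Pow M - {{}})"
    have "fun_vs.dim (zero_sum_space M G) \<le> card M"
      using dim_le_card_support[OF finite_M] by (auto simp: zero_sum_space_def)
    then show "(if separating M G then (if fun_vs.dim (zero_sum_space M G) + i = card M
        then (-1) ^ card G else 0) else 0) =
      (if avoids_roots M (zero_sum_space M G) \<and> fun_vs.dim (zero_sum_space M G) = card M - i
        then (-1) ^ card G else 0)"
      using separating_iff_avoids_roots[OF finite_M, of G] G assms by auto
  qed
  finally show ?thesis .
qed

lemma sep_sum_sign: "0 \<le> (-1) ^ i * sep_sum i M"
proof (cases "i \<le> card M")
  case True
  have "even (card M + (card M - i) + i)" using True by simp
  then have "(-1::int) ^ (card M + (card M - i)) = (-1) ^ i" by (metis minus_one_power_iff even_add)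
  then show ?thesis
    using signed_count_sign[of "Pow M - {{}}" "supported_on M" "card M - i"] finite_M
    by (simp add: sep_sum_eq_signed_count[OF True] dim_supported_on subspace_in_supported_on)
qed (simp add: sep_sum_eq_0[OF finite_M])

lemma abs_sep_sum_le: "\<bar>sep_sum i M\<bar> \<le> int (card {G\<in>sep_families M. card G = i})"
proof (cases "i \<le> card M")
  case True
  have "indep_count (supported_on M) (Pow M - {{}}) (card M - i) \<le> card {G\<in>sep_families M. card G = i}"
    unfolding indep_count_def flat_of_supported_on
  proof (rule card_mono)
    show "finite {G\<in>sep_families M. card G = i}" using finite_sep_families[OF finite_M] by simp
    show "{T \<in> Pow (Pow M - {{}}). avoids_roots M (zero_sum_space M T) \<and>
        fun_vs.dim (zero_sum_space M T) = card M - i \<and> card T + (card M - i) = fun_vs.dim (supported_on M)}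
      \<subseteq> {G\<in>sep_families M. card G = i}"
      using True separating_iff_avoids_roots[OF finite_M]
      by (auto simp: sep_families_def dim_supported_on[OF finite_M])
  qed
  then show ?thesis
    using abs_signed_count_le[of "Pow M - {{}}" "supported_on M" "card M - i"] finite_M
    by (simp add: sep_sum_eq_signed_count[OF True] subspace_in_supported_on)
qed (simp add: sep_sum_eq_0[OF finite_M])

lemma sep_sum_neq_0:
  assumes "T \<in> sep_families M" "card T = i" "fun_vs.dim (zero_sum_space M T) + i = card M"
  shows "sep_sum i M \<noteq> 0"
proof -
  have i: "i \<le> card M" using assms(3) by simp
  have "\<not> supported_on M \<subseteq> sum_kernel S" if S: "S \<in> Pow M - {{}}" for S
  proof -
    obtain p where "p \<in> S" using S by auto
    then show ?thesis
      using S finite_M unit_vec_in_supported_on[of p M] unit_vec_in_sum_kernel[of S p]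
      by (auto intro: finite_subset)
  qed
  moreover have "avoids_roots M (zero_sum_space M T)"
    using assms(1) separating_iff_avoids_roots[OF finite_M] by (auto simp: sep_families_def)
  ultimately have "signed_count (supported_on M) (Pow M - {{}}) (fun_vs.dim (zero_sum_space M T)) \<noteq> 0"
    using signed_count_neq_0[of "Pow M - {{}}" "supported_on M" T] assms finite_M
    by (simp add: flat_of_supported_on subspace_in_supported_on dim_supported_on sep_families_def)
  moreover have "fun_vs.dim (zero_sum_space M T) = card M - i" using assms(3) by simp
  ultimately show ?thesis by (simp add: sep_sum_eq_signed_count[OF i])
qed

end

lemma image_family_inv_into:
  assumes "bij_betw \<sigma> A B"
  shows "G \<subseteq> Pow A \<Longrightarrow> image (inv_into A \<sigma>) ` image \<sigma> ` G = G"
    and "G \<subseteq> Pow B \<Longrightarrow> image \<sigma> ` image (inv_into A \<sigma>) ` G = G"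
proof -
  have inv: "inv_into A \<sigma> ` \<sigma> ` S = S" if "S \<subseteq> A" for S
    using assms that by (simp add: bij_betw_def inv_into_image_cancel)
  have inv': "\<sigma> ` inv_into A \<sigma> ` S = S" if "S \<subseteq> B" for S
    using assms that by (simp add: bij_betw_def image_inv_into_cancel)
  show "image (inv_into A \<sigma>) ` image \<sigma> ` G = G" if "G \<subseteq> Pow A"
  proof -
    have "\<forall>S\<in>G. inv_into A \<sigma> ` \<sigma> ` S = S" using that inv by blast
    then show ?thesis
      unfolding image_image[of "image (inv_into A \<sigma>)" "image \<sigma>" G]
      by (subst image_cong[OF refl, of G _ "\<lambda>S. S"]) auto
  qed
  show "image \<sigma> ` image (inv_into A \<sigma>) ` G = G" if "G \<subseteq> Pow B"
  proof -
    have "\<forall>S\<in>G. \<sigma> ` inv_into A \<sigma> ` S = S" using that inv' by blast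
    then show ?thesis
      unfolding image_image[of "image \<sigma>" "image (inv_into A \<sigma>)" G]
      by (subst image_cong[OF refl, of G _ "\<lambda>S. S"]) auto
  qed
qed

lemma image_family_subset:
  assumes "bij_betw \<sigma> A B" "G \<subseteq> Pow A - {{}}"
  shows "image \<sigma> ` G \<subseteq> Pow B - {{}}"
  using assms by (auto simp: bij_betw_def)

lemma separating_image:
  assumes "bij_betw \<sigma> A B" "G \<subseteq> Pow A" "separating A G"
  shows "separating B (image \<sigma> ` G)"
proof -
  have mem: "\<sigma> p \<in> \<sigma> ` S \<longleftrightarrow> p \<in> S" if "p \<in> A" "S \<in> G" for p S
    using that assms(1,2) by (auto simp: bij_betw_def inj_on_def)
  have B: "B = \<sigma> ` A" using assms(1) by (simp add: bij_betw_def)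
  show ?thesis
    unfolding separating_def
  proof (intro conjI ballI impI)
    fix p' assume "p' \<in> B"
    then obtain p where p: "p \<in> A" "p' = \<sigma> p" using B by auto
    then obtain S where "S \<in> G" "p \<in> S" using assms(3) unfolding separating_def by blast
    then show "\<exists>S'\<in>image \<sigma> ` G. p' \<in> S'" using p by blast
  next
    fix p' q' assume "p' \<in> B" "q' \<in> B" "p' \<noteq> q'"
    then obtain p q where pq: "p \<in> A" "q \<in> A" "p' = \<sigma> p" "q' = \<sigma> q" "p \<noteq> q"
      using B by auto
    then obtain S where S: "S \<in> G" "(p \<in> S) \<noteq> (q \<in> S)"
      using assms(3) unfolding separating_def by blast
    then show "\<exists>S'\<in>image \<sigma> ` G. (p' \<in> S') \<noteq> (q' \<in> S')"
      using mem[OF pq(1) S(1)] mem[OF pq(2) S(1)] pq(3,4) by blast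
  qed
qed

lemma sep_families_image:
  assumes "bij_betw \<sigma> A B" "G \<in> sep_families A"
  shows "image \<sigma> ` G \<in> sep_families B"
proof -
  have G: "G \<subseteq> Pow A - {{}}" "separating A G" using assms(2) by (auto simp: sep_families_def)
  then have "G \<subseteq> Pow A" by blast
  then show ?thesis
    using separating_image[OF assms(1) _ G(2)] image_family_subset[OF assms(1) G(1)]
    by (simp add: sep_families_def)
qed

lemma dim_zero_sum_space_image_le:
  assumes bij: "bij_betw \<sigma> A B" and "finite A" "G \<subseteq> Pow A"
  shows "fun_vs.dim (zero_sum_space B (image \<sigma> ` G)) \<le> fun_vs.dim (zero_sum_space A G)"
proof -
  define \<tau> where "\<tau> = inv_into A \<sigma>"
  define L where "L x = (\<lambda>j. if j \<in> B then x (\<tau> j) else 0)" for x :: "nat \<Rightarrow> real"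
  have inj: "inj_on \<sigma> A" and img: "\<sigma> ` A = B" using bij by (auto simp: bij_betw_def)
  have fB: "finite B" using assms(2) img by blast
  have "zero_sum_space B (image \<sigma> ` G) \<subseteq> L ` zero_sum_space A G"
  proof
    fix y assume y: "y \<in> zero_sum_space B (image \<sigma> ` G)"
    define x where "x p = (if p \<in> A then y (\<sigma> p) else 0)" for p
    have "(\<Sum>j\<in>S. x j) = 0" if S: "S \<in> G" for S
    proof -
      have SA: "S \<subseteq> A" using S assms(3) by blast
      have "(\<Sum>j\<in>S. x j) = (\<Sum>j\<in>\<sigma> ` S. y j)"
        using SA inj_on_subset[OF inj SA] by (simp add: sum.reindex x_def subset_iff)
      then show ?thesis using y S by (auto simp: zero_sum_space_def sum_kernel_def)
    qed
    then have "x \<in> zero_sum_space A G" by (simp add: zero_sum_space_def supported_on_def sum_kernel_def x_def)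
    moreover have "L x = y"
      using y img by (auto simp: L_def x_def \<tau>_def fun_eq_iff inv_into_into f_inv_into_f
          zero_sum_space_def supported_on_def)
    ultimately show "y \<in> L ` zero_sum_space A G" by blast
  qed
  then have "fun_vs.dim (zero_sum_space B (image \<sigma> ` G)) \<le> fun_vs.dim (L ` zero_sum_space A G)"
    by (rule dim_subset_supported_on[OF fB]) (auto simp: L_def supported_on_def)
  also have "\<dots> \<le> fun_vs.dim (zero_sum_space A G)"
    by (rule dim_image_le[OF _ _ assms(2)]) (auto simp: L_def fun_eq_iff fscale_apply zero_sum_space_def)
  finally show ?thesis .
qed

lemma sep_sum_bij_eq:
  assumes bij: "bij_betw \<sigma> A B" and "finite A"
  shows "sep_sum i B = sep_sum i A"
proof -
  define \<tau> where "\<tau> = inv_into A \<sigma>"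
  have bij': "bij_betw \<tau> B A" using bij by (simp add: \<tau>_def bij_betw_inv_into)
  have fB: "finite B" using assms bij_betw_finite by blast
  have sub: "G \<subseteq> Pow X" if "G \<in> sep_families X" for G X using that by (auto simp: sep_families_def)
  have "bij_betw (image (image \<sigma>)) (sep_families A) (sep_families B)"
  proof (rule bij_betw_byWitness[where f' = "image (image \<tau>)"])
    show "\<forall>G\<in>sep_families A. image \<tau> ` image \<sigma> ` G = G"
      unfolding \<tau>_def using image_family_inv_into(1)[OF bij sub] by blast
    show "\<forall>G\<in>sep_families B. image \<sigma> ` image \<tau> ` G = G"
      unfolding \<tau>_def using image_family_inv_into(2)[OF bij sub] by blast
    show "image (image \<sigma>) ` sep_families A \<subseteq> sep_families B"
      by (rule image_subsetI) (rule sep_families_image[OF bij])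
    show "image (image \<tau>) ` sep_families B \<subseteq> sep_families A"
      by (rule image_subsetI) (rule sep_families_image[OF bij'])
  qed
  then have "sep_sum i B = (\<Sum>G\<in>sep_families A.
      if fun_vs.dim (zero_sum_space B (image \<sigma> ` G)) + i = card B then (-1) ^ card (image \<sigma> ` G) else 0)"
    unfolding sep_sum_def by (rule sum.reindex_bij_betw[symmetric])
  also have "\<dots> = sep_sum i A"
    unfolding sep_sum_def
  proof (intro sum.cong refl)
    fix G assume G: "G \<in> sep_families A"
    have "fun_vs.dim (zero_sum_space A (image \<tau> ` image \<sigma> ` G)) \<le>
        fun_vs.dim (zero_sum_space B (image \<sigma> ` G))"
      using dim_zero_sum_space_image_le[OF bij' fB sub[OF sep_families_image[OF bij G]]] .
    then have "fun_vs.dim (zero_sum_space A G) \<le> fun_vs.dim (zero_sum_space B (image \<sigma> ` G))"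
      unfolding \<tau>_def image_family_inv_into(1)[OF bij sub[OF G]] .
    then have "fun_vs.dim (zero_sum_space B (image \<sigma> ` G)) = fun_vs.dim (zero_sum_space A G)"
      using dim_zero_sum_space_image_le[OF bij assms(2) sub[OF G]] by simp
    moreover have "card (image \<sigma> ` G) = card G"
      using bij sub[OF G] by (intro card_image inj_on_subset[OF inj_on_image_Pow]) (auto simp: bij_betw_def)
    ultimately show "(if fun_vs.dim (zero_sum_space B (image \<sigma> ` G)) + i = card B
        then (-1) ^ card (image \<sigma> ` G) else 0) =
      (if fun_vs.dim (zero_sum_space A G) + i = card A then (-1) ^ card G else 0)"
      using bij_betw_same_card[OF bij] by simp
  qed
  finally show ?thesis .
qed

lemma sep_sum_card_eq:
  assumes "finite M"
  shows "sep_sum i M = sep_sum i {1..card M}"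
proof -
  obtain h where "bij_betw h {1..card M} M" using ex_bij_betw_nat_finite_1[OF assms] by blast
  then show ?thesis by (rule sep_sum_bij_eq) simp
qed

lemma dim_zero_sum_space_private:
  assumes "finite M" "finite J" "\<And>t. t \<in> J \<Longrightarrow> R t \<subseteq> M"
    and "\<And>t. t \<in> J \<Longrightarrow> c t \<in> R t" "\<And>t t'. t \<in> J \<Longrightarrow> t' \<in> J \<Longrightarrow> t \<noteq> t' \<Longrightarrow> c t \<notin> R t'"
  shows "fun_vs.dim (zero_sum_space M (R ` J)) + card J = card M"
  using assms(2-5)
proof (induction J rule: finite_induct)
  case empty
  then show ?case by (simp add: zero_sum_space_def dim_supported_on[OF assms(1)])
next
  case (insert t J)
  have fin: "finite (R t')" if "t' \<in> insert t J" for t'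
    using that insert.prems(1) assms(1) finite_subset by blast
  \<comment> \<open>the private point of R t gives a vector of the old space outside the new hyperplane\<close>
  have "c t \<in> M" using insert.prems(1,2) by blast
  moreover have "c t \<notin> R t'" if "t' \<in> J" for t'
    using insert.prems(3)[of t t'] that insert.hyps(2) by auto
  ultimately have "unit_vec (c t) \<in> zero_sum_space M (R ` J)"
    using fin by (auto simp: zero_sum_space_def unit_vec_in_supported_on unit_vec_in_sum_kernel)
  moreover have "unit_vec (c t) \<notin> sum_kernel (R t)"
    using insert.prems(2) fin by (simp add: unit_vec_in_sum_kernel)
  ultimately have "\<not> zero_sum_space M (R ` J) \<subseteq> sum_kernel (R t)" by blast
  then have "fun_vs.dim (zero_sum_space M (R ` insert t J)) + 1 = fun_vs.dim (zero_sum_space M (R ` J))"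
    using dim_zero_sum_space_insert[OF assms(1)] insert.hyps(1) by simp
  moreover have "fun_vs.dim (zero_sum_space M (R ` J)) + card J = card M"
    using insert.IH insert.prems by simp
  ultimately show ?case using insert.hyps by simp
qed

lemma card_Pow_nonsingleton:
  "card (Pow {1..i} - insert {} ((\<lambda>t. {t}) ` {1..i})) = 2 ^ i - 1 - (i::nat)"
proof -
  have "card (insert {} ((\<lambda>t. {t}) ` {1..i})) = i + 1"
    by (subst card_insert_disjoint) (auto simp: card_image inj_on_def)
  moreover have "insert {} ((\<lambda>t. {t}) ` {1..i}) \<subseteq> Pow {1..i}" by auto
  ultimately show ?thesis by (simp add: card_Diff_subset card_Pow)
qed

lemma coordinate_labelling_exists:
  assumes "i \<le> m" "m \<le> 2 ^ i - 1"
  obtains lab where "inj_on lab {1..m}" "\<And>p. p \<in> {1..m} \<Longrightarrow> lab p \<in> Pow {1..i} - {{}}"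
    "\<And>t. t \<in> {1..i} \<Longrightarrow> lab t = {t}"
proof -
  let ?Q = "Pow {1..i} - insert {} ((\<lambda>t. {t}) ` {1..i})"
  have "card {i+1..m} \<le> card ?Q" unfolding card_Pow_nonsingleton using assms by simp
  then obtain \<tau> where \<tau>: "inj_on \<tau> {i+1..m}" "\<tau> ` {i+1..m} \<subseteq> ?Q"
    using card_le_inj[of "{i+1..m}" ?Q] by auto
  define lab where "lab p = (if p \<le> i then {p} else \<tau> p)" for p
  have "inj_on lab {1..m}"
  proof (rule inj_onI)
    fix p q assume pq: "p \<in> {1..m}" "q \<in> {1..m}" "lab p = lab q"
    \<comment> \<open>the labels beyond i are never singletons, so they cannot collide with the first i\<close>
    have "\<tau> r \<noteq> {s} \<and> {s} \<noteq> \<tau> r" if "r \<in> {i+1..m}" "s \<in> {1..i}" for r s using \<tau>(2) that by blast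
    then show "p = q" using pq \<tau>(1) by (auto simp: lab_def inj_on_def split: if_splits)
  qed
  moreover have "lab p \<in> Pow {1..i} - {{}}" if "p \<in> {1..m}" for p
  proof (cases "p \<le> i")
    case False
    then have "\<tau> p \<in> ?Q" using that by (intro subsetD[OF \<tau>(2)] imageI) auto
    then show ?thesis using False by (simp add: lab_def)
  qed (use that in \<open>simp add: lab_def\<close>)
  moreover have "lab t = {t}" if "t \<in> {1..i}" for t using that by (simp add: lab_def)
  ultimately show ?thesis by (rule that)
qed

lemma independent_sep_family_exists:
  assumes "i \<le> m" "m \<le> 2 ^ i - 1"
  obtains T where "T \<in> sep_families {1..m}" "card T = i"
    "fun_vs.dim (zero_sum_space {1..m} T) + i = m"
proof -
  obtain lab where lab: "inj_on lab {1..m}" "\<And>p. p \<in> {1..m} \<Longrightarrow> lab p \<in> Pow {1..i} - {{}}"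
      "\<And>t. t \<in> {1..i} \<Longrightarrow> lab t = {t}"
    using coordinate_labelling_exists[OF assms] by metis
  define R where "R t = {p\<in>{1..m}. t \<in> lab p}" for t
  define T where "T = R ` {1..i}"
  have R_self: "t \<in> R t" if "t \<in> {1..i}" for t using that assms(1) lab(3) by (auto simp: R_def)
  have R_other: "t \<notin> R t'" if "t \<in> {1..i}" "t' \<in> {1..i}" "t \<noteq> t'" for t t'
    using that lab(3) by (auto simp: R_def)
  have "inj_on R {1..i}"
  proof (rule inj_onI)
    fix t t' assume "t \<in> {1..i}" "t' \<in> {1..i}" "R t = R t'"
    then show "t = t'" using R_self R_other by blast
  qed
  then have card: "card T = i" by (simp add: T_def card_image)
  have sub: "T \<subseteq> Pow {1..m} - {{}}" using R_self by (auto simp: T_def R_def)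
  have "separating {1..m} T"
    unfolding separating_def
  proof (intro conjI ballI impI)
    fix p assume p: "p \<in> {1..m}"
    then obtain t where "t \<in> lab p" using lab(2)[OF p] by blast
    then show "\<exists>S\<in>T. p \<in> S" using p lab(2)[OF p] by (auto simp: T_def R_def)
  next
    fix p q assume p: "p \<in> {1..m}" and q: "q \<in> {1..m}" and "p \<noteq> q"
    then have "lab p \<noteq> lab q" using inj_on_eq_iff[OF lab(1) p q] by simp
    then obtain t where "(t \<in> lab p) \<noteq> (t \<in> lab q)" by blast
    moreover have "t \<in> {1..i}" using calculation lab(2)[OF p] lab(2)[OF q] by blast
    ultimately show "\<exists>S\<in>T. (p \<in> S) \<noteq> (q \<in> S)" using p q by (auto simp: T_def R_def)
  qed
  moreover have "fun_vs.dim (zero_sum_space {1..m} T) + i = m"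
    using dim_zero_sum_space_private[of "{1..m}" "{1..i}" R "\<lambda>t. t"] R_self R_other
    by (simp add: T_def R_def subset_iff)
  ultimately show ?thesis using sub card by (intro that) (simp_all add: sep_families_def)
qed

lemma sep_sum_neq_0_range:
  assumes "i \<le> m" "m \<le> 2 ^ i - 1"
  shows "sep_sum i {1..m} \<noteq> 0"
proof -
  obtain T where "T \<in> sep_families {1..m}" "card T = i" "fun_vs.dim (zero_sum_space {1..m} T) + i = m"
    using independent_sep_family_exists[OF assms] .
  then show ?thesis using sep_sum_neq_0[of "{1..m}" T i] by simp
qed

definition membership_list :: "nat \<Rightarrow> nat set list \<Rightarrow> nat set list" where
  "membership_list m xs = map (\<lambda>p. {t. t < length xs \<and> p \<in> xs ! t}) [1..<Suc m]"

lemma nth_membership_list: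
  "k < m \<Longrightarrow> membership_list m xs ! k = {t. t < length xs \<and> Suc k \<in> xs ! t}"
  by (simp add: membership_list_def del: upt_Suc)

lemma length_membership_list [simp]: "length (membership_list m xs) = m"
  by (simp add: membership_list_def)

lemma membership_list_distinct:
  assumes "separating {1..m} (set xs)"
  shows "distinct (membership_list m xs)" "set (membership_list m xs) \<subseteq> Pow {..<length xs} - {{}}"
proof -
  have some: "\<exists>t<length xs. Suc k \<in> xs ! t" if "k < m" for k
  proof -
    have "Suc k \<in> {1..m}" using that by simp
    then obtain S where "S \<in> set xs" "Suc k \<in> S" using assms unfolding separating_def by blast
    then show ?thesis by (metis in_set_conv_nth)
  qed
  have diff: "\<exists>t<length xs. (Suc k \<in> xs ! t) \<noteq> (Suc l \<in> xs ! t)" if "k < m" "l < m" "k \<noteq> l" for k l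
  proof -
    have "Suc k \<in> {1..m}" "Suc l \<in> {1..m}" "Suc k \<noteq> Suc l" using that by auto
    then obtain S where "S \<in> set xs" "(Suc k \<in> S) \<noteq> (Suc l \<in> S)"
      using assms unfolding separating_def by blast
    then show ?thesis by (metis in_set_conv_nth)
  qed
  show "distinct (membership_list m xs)"
    unfolding distinct_conv_nth
  proof (intro allI impI)
    fix k l assume kl: "k < length (membership_list m xs)" "l < length (membership_list m xs)" "k \<noteq> l"
    then obtain t where "(Suc k \<in> xs ! t) \<noteq> (Suc l \<in> xs ! t)" "t < length xs"
      using diff[of k l] by auto
    moreover have "t \<in> membership_list m xs ! k \<longleftrightarrow> Suc k \<in> xs ! t"
      "t \<in> membership_list m xs ! l \<longleftrightarrow> Suc l \<in> xs ! t"
      using kl calculation(2) by (simp_all add: nth_membership_list)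
    ultimately show "membership_list m xs ! k \<noteq> membership_list m xs ! l" by blast
  qed
  show "set (membership_list m xs) \<subseteq> Pow {..<length xs} - {{}}"
  proof
    fix Y assume "Y \<in> set (membership_list m xs)"
    then obtain k where "k < m" "Y = membership_list m xs ! k" by (auto simp: in_set_conv_nth)
    then show "Y \<in> Pow {..<length xs} - {{}}" using some[of k] by (auto simp: nth_membership_list)
  qed
qed

lemma membership_list_inj:
  assumes "length xs = length ys" "set xs \<subseteq> Pow {1..m}" "set ys \<subseteq> Pow {1..m}"
    and "membership_list m xs = membership_list m ys"
  shows "xs = ys"
proof (rule nth_equalityI)
  show "length xs = length ys" by (rule assms(1))
  \<comment> \<open>the t-th set is recovered as the set of coordinates whose membership set contains t\<close>
  have recover: "zs ! t = {p\<in>{1..m}. t \<in> membership_list m zs ! (p - 1)}"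
    if "t < length zs" "set zs \<subseteq> Pow {1..m}" for zs t
  proof -
    have "zs ! t \<subseteq> {1..m}" using nth_mem[OF that(1)] that(2) by blast
    moreover have "membership_list m zs ! (p - 1) = {t. t < length zs \<and> p \<in> zs ! t}"
      if "p \<in> {1..m}" for p
      using that by (subst nth_membership_list) auto
    ultimately show ?thesis using that by auto
  qed
  fix t assume "t < length xs"
  then show "xs ! t = ys ! t"
    using recover[of t xs] recover[of t ys] assms by simp
qed

lemma card_distinct_lists:
  assumes "finite X"
  shows "card {ys. length ys = m \<and> distinct ys \<and> set ys \<subseteq> X} = (card X choose m) * fact m"
proof (cases "m \<le> card X")
  case True
  have "fact (card X) = fact (card X - m) * ((card X choose m) * fact m)"
    using binomial_fact_lemma[OF True] by (simp add: algebra_simps)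
  then have "(card X choose m) * fact m = fact (card X) div fact (card X - m)" by simp
  also have "\<dots> = \<Prod>{card X - m + 1..card X}" using fact_div_fact[of "card X - m" "card X"] True by simp
  finally show ?thesis using card_lists_distinct_length_eq[OF assms True] by simp
next
  case False
  have "{ys. length ys = m \<and> distinct ys \<and> set ys \<subseteq> X} = {}"
  proof (rule ccontr)
    assume "{ys. length ys = m \<and> distinct ys \<and> set ys \<subseteq> X} \<noteq> {}"
    then obtain ys where ys: "length ys = m" "distinct ys" "set ys \<subseteq> X" by auto
    then have "m \<le> card X" using card_mono[OF assms ys(3)] distinct_card[OF ys(2)] by simp
    with False show False by simp
  qed
  then show ?thesis using False by (simp only: card.empty) (simp add: binomial_eq_0)
qed

lemma card_sep_families_fact_le:
  "card {G\<in>sep_families {1..m}. card G = i} * fact i \<le> ((2 ^ i - 1) choose m) * fact m"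
proof -
  let ?SG = "{G\<in>sep_families {1..m}. card G = i}"
  let ?L = "\<Union>G\<in>?SG. permutations_of_set G"
  let ?target = "{ys. length ys = m \<and> distinct ys \<and> set ys \<subseteq> Pow {..<i} - {{}}}"
  have fin: "finite G" if "G \<in> ?SG" for G
    using that finite_subset[of G "Pow {1..m}"] by (auto simp: sep_families_def)
  have L: "length xs = i \<and> set xs \<subseteq> Pow {1..m} \<and> separating {1..m} (set xs)" if "xs \<in> ?L" for xs
  proof -
    from that obtain G where G: "G \<in> ?SG" "set xs = G" "distinct xs"
      by (auto simp: permutations_of_set_def)
    then show ?thesis using distinct_card[OF G(3)] by (auto simp: sep_families_def)
  qed
  have "card ?L = (\<Sum>G\<in>?SG. card (permutations_of_set G))"
  proof (rule card_UN_disjoint)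
    show "finite ?SG" using finite_sep_families[of "{1..m}"] by simp
    show "\<forall>G\<in>?SG. \<forall>H\<in>?SG. G \<noteq> H \<longrightarrow> permutations_of_set G \<inter> permutations_of_set H = {}"
      by (auto simp: permutations_of_set_def)
  qed simp
  also have "\<dots> = card ?SG * fact i" using fin by simp
  finally have card_L: "card ?L = card ?SG * fact i" .
  \<comment> \<open>an ordering of a separating family is encoded by the membership sets of the coordinates\<close>
  have "membership_list m ` ?L \<subseteq> ?target"
  proof
    fix ys assume "ys \<in> membership_list m ` ?L"
    then obtain xs where "xs \<in> ?L" "ys = membership_list m xs" by blast
    then show "ys \<in> ?target" using L[of xs] membership_list_distinct[of m xs] by simp
  qed
  moreover have "inj_on (membership_list m) ?L"
  proof (rule inj_onI)
    fix xs ys assume "xs \<in> ?L" "ys \<in> ?L" "membership_list m xs = membership_list m ys"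
    then show "xs = ys" using L[of xs] L[of ys] by (intro membership_list_inj[of xs ys m]) auto
  qed
  moreover have "finite ?target"
    by (rule finite_subset[OF _ finite_lists_length_eq[of "Pow {..<i} - {{}}" m]]) auto
  ultimately have "card ?L \<le> card ?target" by (intro card_inj_on_le)
  also have "\<dots> = ((2 ^ i - 1) choose m) * fact m"
    by (simp add: card_distinct_lists card_Diff_singleton card_Pow)
  finally show ?thesis using card_L by simp
qed

lemma sep_sum_eq_0_large:
  assumes "2 ^ i \<le> m"
  shows "sep_sum i {1..m} = 0"
proof -
  have "0 < (2::nat) ^ i" by simp
  then have "(2 ^ i - 1) choose m = 0" using assms by (intro binomial_eq_0) linarith
  then have "card {G\<in>sep_families {1..m}. card G = i} * fact i \<le> 0"
    using card_sep_families_fact_le[of m i] by (simp only: mult_0)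
  then have "card {G\<in>sep_families {1..m}. card G = i} = 0" by simp
  then show ?thesis using abs_sep_sum_le[of "{1..m}" i] by simp
qed

lemma abs_sep_sum_bound:
  "real (nat \<bar>sep_sum i {1..m}\<bar>) \<le> real ((2 ^ i - 1) choose m) * fact m / fact i"
proof -
  have "nat \<bar>sep_sum i {1..m}\<bar> \<le> card {G\<in>sep_families {1..m}. card G = i}"
    using abs_sep_sum_le[of "{1..m}" i] by simp
  then have "nat \<bar>sep_sum i {1..m}\<bar> * fact i \<le> ((2 ^ i - 1) choose m) * fact m"
    using card_sep_families_fact_le[of m i] mult_le_mono1 le_trans by blast
  then have "real (nat \<bar>sep_sum i {1..m}\<bar> * fact i) \<le> real (((2 ^ i - 1) choose m) * fact m)"
    by (simp only: of_nat_le_iff)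
  then have "real (nat \<bar>sep_sum i {1..m}\<bar>) * fact i \<le> real ((2 ^ i - 1) choose m) * fact m"
    by (simp only: of_nat_mult of_nat_fact)
  then show ?thesis by (simp add: le_divide_eq)
qed

definition rep_maps :: "nat \<Rightarrow> (nat \<Rightarrow> nat) set" where
  "rep_maps n = {g. (\<forall>j. j \<notin> {1..n} \<longrightarrow> g j = 0) \<and>
     (\<forall>j\<in>{1..n}. g j = 0 \<or> (g j \<le> j \<and> g (g j) = g j))}"

definition reps :: "nat \<Rightarrow> (nat \<Rightarrow> nat) \<Rightarrow> nat set" where
  "reps n g = {j\<in>{1..n}. g j = j}"

lemma rep_maps_outside: "g \<in> rep_maps n \<Longrightarrow> j \<notin> {1..n} \<Longrightarrow> g j = 0"
  by (simp add: rep_maps_def)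

lemma rep_maps_inside:
  assumes "g \<in> rep_maps n" "j \<in> {1..n}" "g j \<noteq> 0"
  shows "g j \<in> reps n g" "g j \<le> j"
proof -
  have "g j = 0 \<or> (g j \<le> j \<and> g (g j) = g j)" using assms(1,2) unfolding rep_maps_def by blast
  then have "g j \<le> j \<and> g (g j) = g j" using assms(3) by simp
  then show "g j \<in> reps n g" "g j \<le> j" using assms(2,3) by (auto simp: reps_def)
qed

lemma reps_subset: "reps n g \<subseteq> {1..n}"
  by (auto simp: reps_def)

lemma finite_reps: "finite (reps n g)"
  by (rule finite_subset[OF reps_subset]) simp

definition ext_values :: "nat \<Rightarrow> (nat \<Rightarrow> nat) \<Rightarrow> nat set" where
  "ext_values n g = insert (Suc n) (insert 0 (reps n g))"

lemma rep_maps_0: "rep_maps 0 = {\<lambda>_. 0}"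
  by (auto simp: rep_maps_def)

lemma rep_maps_extend:
  assumes g: "g \<in> rep_maps n" and v: "v \<in> ext_values n g"
  shows "g(Suc n := v) \<in> rep_maps (Suc n)"
  unfolding rep_maps_def
proof (intro CollectI conjI allI impI ballI)
  fix j assume "j \<notin> {1..Suc n}"
  then have "j \<noteq> Suc n" "j \<notin> {1..n}" by auto
  then show "(g(Suc n := v)) j = 0" using rep_maps_outside[OF g] by simp
next
  fix j assume j: "j \<in> {1..Suc n}"
  let ?h = "g(Suc n := v)"
  show "?h j = 0 \<or> (?h j \<le> j \<and> ?h (?h j) = ?h j)"
  proof (cases "j = Suc n")
    case True
    then show ?thesis using v by (auto simp: ext_values_def reps_def)
  next
    case False
    then have jn: "j \<in> {1..n}" using j by auto
    show ?thesis
    proof (cases "g j = 0")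
      case nz: False
      have "g j \<le> n" "g (g j) = g j" "g j \<le> j"
        using rep_maps_inside[OF g jn nz] by (auto simp: reps_def)
      then show ?thesis using False by simp
    qed (use False in simp)
  qed
qed

lemma rep_maps_restrict:
  assumes h: "h \<in> rep_maps (Suc n)"
  shows "h(Suc n := 0) \<in> rep_maps n" "h (Suc n) \<in> ext_values n (h(Suc n := 0))"
proof -
  have out: "h j = 0" if "j \<notin> {1..Suc n}" for j using rep_maps_outside[OF h that] .
  have inside: "h j = 0 \<or> (h j \<le> j \<and> h (h j) = h j)" if "j \<in> {1..Suc n}" for j
    using h that unfolding rep_maps_def by blast
  show "h(Suc n := 0) \<in> rep_maps n"
    unfolding rep_maps_def
  proof (intro CollectI conjI allI impI ballI)
    fix j assume "j \<notin> {1..n}"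
    then show "(h(Suc n := 0)) j = 0" using out[of j] by (cases "j = Suc n") auto
  next
    fix j assume j: "j \<in> {1..n}"
    then have "h j = 0 \<or> (h j \<le> j \<and> h (h j) = h j)" "j \<noteq> Suc n" using inside[of j] by auto
    then show "(h(Suc n := 0)) j = 0 \<or>
        ((h(Suc n := 0)) j \<le> j \<and> (h(Suc n := 0)) ((h(Suc n := 0)) j) = (h(Suc n := 0)) j)"
      using j by auto
  qed
  show "h (Suc n) \<in> ext_values n (h(Suc n := 0))"
  proof (cases "h (Suc n) = 0 \<or> h (Suc n) = Suc n")
    case False
    then have "h (Suc n) \<le> Suc n" "h (h (Suc n)) = h (Suc n)" using inside[of "Suc n"] by auto
    then show ?thesis using False by (auto simp: ext_values_def reps_def)
  qed (auto simp: ext_values_def)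
qed

lemma bij_betw_rep_maps_Suc:
  "bij_betw (\<lambda>(g, v). g(Suc n := v)) (Sigma (rep_maps n) (ext_values n)) (rep_maps (Suc n))"
proof (rule bij_betw_byWitness[where f' = "\<lambda>h. (h(Suc n := 0), h (Suc n))"])
  show "\<forall>a\<in>Sigma (rep_maps n) (ext_values n).
      (\<lambda>h. (h(Suc n := 0), h (Suc n))) ((\<lambda>(g, v). g(Suc n := v)) a) = a"
    using rep_maps_outside[of _ n "Suc n"] by (auto simp: fun_upd_idem)
qed (use rep_maps_extend rep_maps_restrict in auto)

lemma finite_rep_maps: "finite (rep_maps n)"
proof (induction n)
  case (Suc n)
  then have "finite (Sigma (rep_maps n) (ext_values n))"
    by (auto simp: ext_values_def finite_reps)
  then show ?case using bij_betw_finite[OF bij_betw_rep_maps_Suc] by blast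
qed (simp add: rep_maps_0)

lemma card_reps_extend:
  assumes "g \<in> rep_maps n" "v \<in> ext_values n g"
  shows "card (reps (Suc n) (g(Suc n := v))) = card (reps n g) + (if v = Suc n then 1 else 0)"
proof -
  have "reps (Suc n) (g(Suc n := v)) = reps n g \<union> (if v = Suc n then {Suc n} else {})"
    using rep_maps_outside[OF assms(1), of "Suc n"] by (auto simp: reps_def)
  moreover have "Suc n \<notin> reps n g" by (auto simp: reps_def)
  ultimately show ?thesis using finite_reps[of n g] by auto
qed

lemma sum_rep_maps_Suc:
  fixes f :: "nat \<Rightarrow> int"
  shows "(\<Sum>h\<in>rep_maps (Suc n). f (card (reps (Suc n) h))) =
    (\<Sum>g\<in>rep_maps n. f (card (reps n g) + 1) + int (card (reps n g) + 1) * f (card (reps n g)))"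
proof -
  have fin: "finite (ext_values n g)" for g by (simp add: ext_values_def finite_reps)
  have "(\<Sum>h\<in>rep_maps (Suc n). f (card (reps (Suc n) h))) =
      (\<Sum>g\<in>rep_maps n. \<Sum>v\<in>ext_values n g. f (card (reps (Suc n) (g(Suc n := v)))))"
    by (simp add: sum.reindex_bij_betw[OF bij_betw_rep_maps_Suc, symmetric] sum.Sigma[OF finite_rep_maps]
        fin split_def)
  also have "\<dots> = (\<Sum>g\<in>rep_maps n. f (card (reps n g) + 1) + int (card (reps n g) + 1) * f (card (reps n g)))"
  proof (intro sum.cong refl)
    fix g assume g: "g \<in> rep_maps n"
    \<comment> \<open>the new point Suc n opens a new block, or joins the block of 0 or of one of the representatives\<close>
    let ?c = "card (reps n g)"
    have notin: "Suc n \<notin> insert 0 (reps n g)" "0 \<notin> reps n g" by (auto simp: reps_def)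
    have "(\<Sum>v\<in>insert 0 (reps n g). f (card (reps (Suc n) (g(Suc n := v))))) =
        (\<Sum>v\<in>insert 0 (reps n g). f ?c)"
      using notin(1) by (intro sum.cong refl) (auto simp: card_reps_extend[OF g] ext_values_def)
    also have "\<dots> = int (?c + 1) * f ?c" using notin(2) finite_reps[of n g] by simp
    finally show "(\<Sum>v\<in>ext_values n g. f (card (reps (Suc n) (g(Suc n := v))))) =
        f (?c + 1) + int (?c + 1) * f ?c"
      using notin(1) finite_reps[of n g] card_reps_extend[OF g, of "Suc n"]
      by (simp add: ext_values_def)
  qed
  finally show ?thesis .
qed

lemma sum_Stirling_recurrence:
  fixes f :: "nat \<Rightarrow> int"
  shows "(\<Sum>k\<le>n. int (Stirling (Suc n) (Suc k)) * (f (k + 1) + int (k + 1) * f k)) =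
    (\<Sum>k\<le>Suc n. int (Stirling (Suc (Suc n)) (Suc k)) * f k)"
proof -
  have "(\<Sum>k\<le>Suc n. int (Stirling (Suc (Suc n)) (Suc k)) * f k) =
      (\<Sum>k\<le>Suc n. int (Stirling (Suc n) k) * f k) +
      (\<Sum>k\<le>Suc n. int (Suc k) * int (Stirling (Suc n) (Suc k)) * f k)"
  proof -
    have "int (Stirling (Suc (Suc n)) (Suc k)) * f k =
        int (Stirling (Suc n) k) * f k + int (Suc k) * int (Stirling (Suc n) (Suc k)) * f k" for k
      by (simp only: Stirling.simps(4) of_nat_add of_nat_mult) (simp add: algebra_simps)
    then show ?thesis by (simp only: sum.distrib)
  qed
  also have "(\<Sum>k\<le>Suc n. int (Stirling (Suc n) k) * f k) =
      (\<Sum>k\<le>n. int (Stirling (Suc n) (Suc k)) * f (k + 1))"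
    by (simp add: sum.atMost_Suc_shift del: Stirling.simps(4) sum.atMost_Suc)
  also have "(\<Sum>k\<le>Suc n. int (Suc k) * int (Stirling (Suc n) (Suc k)) * f k) =
      (\<Sum>k\<le>n. int (Suc k) * int (Stirling (Suc n) (Suc k)) * f k)"
    by (simp del: Stirling.simps(4))
  finally show ?thesis by (simp add: sum.distrib algebra_simps del: Stirling.simps(4))
qed

lemma sum_rep_maps_Stirling:
  fixes f :: "nat \<Rightarrow> int"
  shows "(\<Sum>g\<in>rep_maps n. f (card (reps n g))) = (\<Sum>k\<le>n. int (Stirling (Suc n) (Suc k)) * f k)"
proof (induction n arbitrary: f)
  case 0
  then show ?case by (simp add: rep_maps_0 reps_def)
next
  case (Suc n)
  show ?case
    unfolding sum_rep_maps_Suc Suc.IH[of "\<lambda>k. f (k + 1) + int (k + 1) * f k"]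
    by (rule sum_Stirling_recurrence)
qed

definition expand :: "nat \<Rightarrow> (nat \<Rightarrow> nat) \<Rightarrow> nat set \<Rightarrow> nat set" where
  "expand n g S = {j\<in>{1..n}. g j \<in> S}"

definition column :: "nat set set \<Rightarrow> nat \<Rightarrow> nat set set" where
  "column F j = {I\<in>F. j \<in> I}"

definition rep_map_of :: "nat \<Rightarrow> nat set set \<Rightarrow> nat \<Rightarrow> nat" where
  "rep_map_of n F j = (if j \<in> {1..n} \<and> column F j \<noteq> {} then (LEAST k. column F k = column F j) else 0)"

definition family_of :: "nat \<Rightarrow> nat set set \<Rightarrow> nat set set" where
  "family_of n F = (\<lambda>I. I \<inter> reps n (rep_map_of n F)) ` F"

lemma expand_Int_reps: "S \<subseteq> reps n g \<Longrightarrow> expand n g S \<inter> reps n g = S"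
  by (auto simp: expand_def reps_def)

context
  fixes n g G
  assumes g: "g \<in> rep_maps n" and G: "G \<in> sep_families (reps n g)"
begin


lemma sep_family_subset: "S \<in> G \<Longrightarrow> S \<subseteq> (reps n g) \<and> S \<noteq> {}"
  using G by (auto simp: sep_families_def sep_families_def)

lemma separating_sep_family: "separating (reps n g) G" using G by (simp add: sep_families_def)

lemma inj_on_expand: "inj_on (expand n g) G"
  by (rule inj_onI) (metis expand_Int_reps sep_family_subset)

lemma expand_family_in: "(expand n g ` G) \<in> Pow (Pow {1..n} - {{}})"
proof -
  have "expand n g S \<in> (Pow {1..n} - {{}})" if S: "S \<in> G" for S
  proof -
    obtain m where m: "m \<in> S" using sep_family_subset[OF S] by blast
    then have "m \<in> (reps n g)" using sep_family_subset[OF S] by blast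
    then have "m \<in> expand n g S" using m by (auto simp: reps_def expand_def)
    then show ?thesis by (auto simp: Pow_def expand_def)
  qed
  then show ?thesis by blast
qed

lemma mem_expand: "j \<in> expand n g S \<longleftrightarrow> j \<in> {1..n} \<and> g j \<in> S"
  by (simp add: expand_def)

lemma column_expand: "j \<in> {1..n} \<Longrightarrow> column (expand n g ` G) j = expand n g ` {S\<in>G. g j \<in> S}"
  by (auto simp: column_def mem_expand)

lemma column_expand_outside: "j \<notin> {1..n} \<Longrightarrow> column (expand n g ` G) j = {}"
  by (auto simp: column_def mem_expand)

lemma column_expand_eq_iff:
  assumes j: "j \<in> {1..n}" and j': "j' \<in> {1..n}"
  shows "column (expand n g ` G) j = column (expand n g ` G) j' \<longleftrightarrow> g j = g j'"
proof
  assume "g j = g j'" then show "column (expand n g ` G) j = column (expand n g ` G) j'" using column_expand[OF j] column_expand[OF j'] by simp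
next
  assume eq: "column (expand n g ` G) j = column (expand n g ` G) j'"
  show "g j = g j'"
  proof (rule ccontr)
    assume ne: "g j \<noteq> g j'"
    have memc: "expand n g S \<in> column (expand n g ` G) k \<longleftrightarrow> g k \<in> S" if "S \<in> G" "k \<in> {1..n}" for S k
    proof -
      have "expand n g S \<in> column (expand n g ` G) k \<longleftrightarrow> (\<exists>S'\<in>G. g k \<in> S' \<and> expand n g S = expand n g S')"
        using column_expand[OF that(2)] by auto
      also have "\<dots> \<longleftrightarrow> g k \<in> S" using inj_on_expand that(1) by (auto simp: inj_on_def)
      finally show ?thesis .
    qed
    show False
    proof (cases "g j = 0")
      case True
      then have "g j' \<noteq> 0" using ne by simp
      then have "g j' \<in> (reps n g)" using rep_maps_inside[OF g j'] by blast
      then obtain S where S: "S \<in> G" "g j' \<in> S" using separating_sep_family unfolding separating_def by blast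
      have "g j \<notin> S" using True sep_family_subset[OF S(1)] reps_subset by force
      then show False using memc[OF S(1) j] memc[OF S(1) j'] S(2) eq by blast
    next
      case False
      then have gjM: "g j \<in> (reps n g)" using rep_maps_inside[OF g j] by blast
      show False
      proof (cases "g j' = 0")
        case True
        obtain S where S: "S \<in> G" "g j \<in> S" using separating_sep_family gjM unfolding separating_def by blast
        have "g j' \<notin> S" using True sep_family_subset[OF S(1)] reps_subset by force
        then show False using memc[OF S(1) j] memc[OF S(1) j'] S(2) eq by blast
      next
        case False
        then have gj'M: "g j' \<in> (reps n g)" using rep_maps_inside[OF g j'] by blast
        have "\<exists>S\<in>G. (g j \<in> S) \<noteq> (g j' \<in> S)"
          using separating_sep_family[unfolded separating_def, THEN conjunct2, rule_format, OF gjM gj'M ne] .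
        then obtain S where S: "S \<in> G" "(g j \<in> S) \<noteq> (g j' \<in> S)" by (elim bexE)
        have "(expand n g S \<in> column (expand n g ` G) j) \<noteq> (expand n g S \<in> column (expand n g ` G) j')"
          using S(2) memc[OF S(1) j] memc[OF S(1) j'] by simp
        then show False using eq by simp
      qed
    qed
  qed
qed

lemma column_expand_empty_iff:
  assumes j: "j \<in> {1..n}"
  shows "column (expand n g ` G) j = {} \<longleftrightarrow> g j = 0"
proof
  assume "g j = 0"
  then show "column (expand n g ` G) j = {}" using column_expand[OF j] sep_family_subset reps_subset by fastforce
next
  assume e: "column (expand n g ` G) j = {}"
  show "g j = 0"
  proof (rule ccontr)
    assume "g j \<noteq> 0"
    then have "g j \<in> (reps n g)" using rep_maps_inside[OF g j] by blast
    then obtain S where "S \<in> G" "g j \<in> S" using separating_sep_family unfolding separating_def by blast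
    then show False using e column_expand[OF j] by blast
  qed
qed

lemma rep_map_of_expand: "rep_map_of n (expand n g ` G) = g"
proof
  fix j
  show "rep_map_of n (expand n g ` G) j = g j"
  proof (cases "j \<in> {1..n}")
    case False
    then show ?thesis using rep_maps_outside[OF g False] False by (auto simp: rep_map_of_def)
  next
    case j: True
    show ?thesis
    proof (cases "g j = 0")
      case True
      then show ?thesis using column_expand_empty_iff[OF j] by (simp add: rep_map_of_def)
    next
      case False
      have ne: "column (expand n g ` G) j \<noteq> {}" using column_expand_empty_iff[OF j] False by simp
      have gj: "g j \<in> (reps n g)" "g j \<le> j" using rep_maps_inside[OF g j False] by auto
      then have gjn: "g j \<in> {1..n}" using reps_subset by blast
      have ggj: "g (g j) = g j" using gj(1) by (simp add: reps_def)
      have "(LEAST m. column (expand n g ` G) m = column (expand n g ` G) j) = g j"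
      proof (rule Least_equality)
        show "column (expand n g ` G) (g j) = column (expand n g ` G) j" using column_expand_eq_iff[OF gjn j] ggj by simp
      next
        fix m assume m: "column (expand n g ` G) m = column (expand n g ` G) j"
        show "g j \<le> m"
        proof (rule ccontr)
          assume lt: "\<not> g j \<le> m"
          have mn: "m \<in> {1..n}" using m ne column_expand_outside by (cases "m \<in> {1..n}") auto
          have "g m = g j" using column_expand_eq_iff[OF mn j] m by simp
          moreover have "g m \<le> m" using rep_maps_inside[OF g mn] False calculation by auto
          ultimately show False using lt by simp
        qed
      qed
      then show ?thesis using j ne by (simp add: rep_map_of_def)
    qed
  qed
qed

lemma family_of_expand: "family_of n (expand n g ` G) = G"
proof -
  have "family_of n (expand n g ` G) = (\<lambda>I. I \<inter> (reps n g)) ` (expand n g ` G)" by (simp add: family_of_def rep_map_of_expand)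
  also have "\<dots> = (\<lambda>S. expand n g S \<inter> (reps n g)) ` G" by (simp add: image_image)
  also have "\<dots> = G" using expand_Int_reps sep_family_subset by (auto simp: image_iff)
  finally show ?thesis .
qed

lemma card_expand_family: "card (expand n g ` G) = card G"
  by (rule card_image[OF inj_on_expand])

end

context
  fixes n :: nat and F :: "nat set set"
  assumes F: "F \<subseteq> Pow {1..n} - {{}}"
begin


lemma column_outside: "j \<notin> {1..n} \<Longrightarrow> column F j = {}"
  using F by (force simp: column_def Pow_def)

lemma rep_map_of_props:
  assumes j: "j \<in> {1..n}" and ne: "column F j \<noteq> {}"
  shows "column F ((rep_map_of n F) j) = column F j" "(rep_map_of n F) j \<le> j" "(rep_map_of n F) j \<in> {1..n}"
proof -
  have gdef: "(rep_map_of n F) j = (LEAST m. column F m = column F j)" using j ne by (simp add: rep_map_of_def)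
  show c: "column F ((rep_map_of n F) j) = column F j" unfolding gdef by (rule LeastI[of _ j]) simp
  show l: "(rep_map_of n F) j \<le> j" unfolding gdef by (rule Least_le) simp
  have "(rep_map_of n F) j \<in> {1..n}"
  proof (rule ccontr)
    assume "(rep_map_of n F) j \<notin> {1..n}"
    then have "column F ((rep_map_of n F) j) = {}" by (rule column_outside)
    then show False using c ne by simp
  qed
  then show "(rep_map_of n F) j \<in> {1..n}" .
qed

lemma rep_map_of_eq_iff:
  assumes j: "j \<in> {1..n}" and j': "j' \<in> {1..n}" and ne: "column F j \<noteq> {}"
  shows "(rep_map_of n F) j = (rep_map_of n F) j' \<longleftrightarrow> column F j = column F j'"
proof
  assume eq: "(rep_map_of n F) j = (rep_map_of n F) j'"
  have "(rep_map_of n F) j \<noteq> 0" using rep_map_of_props(3)[OF j ne] by simp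
  then have ne': "column F j' \<noteq> {}" using eq j' by (auto simp: rep_map_of_def split: if_splits)
  show "column F j = column F j'" using rep_map_of_props(1)[OF j ne] rep_map_of_props(1)[OF j' ne'] eq by simp
next
  assume "column F j = column F j'"
  then show "(rep_map_of n F) j = (rep_map_of n F) j'" using j j' by (simp add: rep_map_of_def)
qed

lemma rep_map_of_rep_maps: "(rep_map_of n F) \<in> rep_maps n"
  unfolding rep_maps_def
proof (intro CollectI conjI allI impI ballI)
  fix j assume "j \<notin> {1..n}" then show "(rep_map_of n F) j = 0" by (auto simp: rep_map_of_def)
next
  fix j assume j: "j \<in> {1..n}"
  show "(rep_map_of n F) j = 0 \<or> ((rep_map_of n F) j \<le> j \<and> (rep_map_of n F) ((rep_map_of n F) j) = (rep_map_of n F) j)"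
  proof (cases "column F j = {}")
    case True then show ?thesis by (simp add: rep_map_of_def)
  next
    case False
    have "(rep_map_of n F) ((rep_map_of n F) j) = (rep_map_of n F) j"
      using rep_map_of_eq_iff[OF rep_map_of_props(3)[OF j False] j] rep_map_of_props(1)[OF j False] False by simp
    then show ?thesis using rep_map_of_props(2)[OF j False] by simp
  qed
qed

lemma mem_iff_rep_mem:
  assumes I: "I \<in> F" and j: "j \<in> {1..n}"
  shows "j \<in> I \<longleftrightarrow> (rep_map_of n F) j \<in> I \<inter> reps n (rep_map_of n F)"
proof
  assume jI: "j \<in> I"
  then have ne: "column F j \<noteq> {}" using I by (auto simp: column_def)
  have "I \<in> column F ((rep_map_of n F) j)" using rep_map_of_props(1)[OF j ne] I jI by (simp add: column_def)
  then have "(rep_map_of n F) j \<in> I" by (simp add: column_def)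
  moreover have "(rep_map_of n F) j \<in> reps n (rep_map_of n F)"
    using rep_map_of_props[OF j ne] rep_map_of_eq_iff[OF rep_map_of_props(3)[OF j ne] j] ne by (simp add: reps_def)
  ultimately show "(rep_map_of n F) j \<in> I \<inter> reps n (rep_map_of n F)" by blast
next
  assume h: "(rep_map_of n F) j \<in> I \<inter> reps n (rep_map_of n F)"
  then have "(rep_map_of n F) j \<noteq> 0" using reps_subset by force
  then have ne: "column F j \<noteq> {}" by (auto simp: rep_map_of_def split: if_splits)
  have "I \<in> column F ((rep_map_of n F) j)" using h I by (simp add: column_def)
  then have "I \<in> column F j" using rep_map_of_props(1)[OF j ne] by simp
  then show "j \<in> I" by (simp add: column_def)
qed

lemma expand_rep_Int: "expand n (rep_map_of n F) (I \<inter> reps n (rep_map_of n F)) = I" if I: "I \<in> F" for I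
proof -
  have "I \<subseteq> {1..n}" using F I by (auto simp: Pow_def)
  then show ?thesis using mem_iff_rep_mem[OF I] by (auto simp: expand_def)
qed

lemma family_of_sep_families: "family_of n F \<in> sep_families (reps n (rep_map_of n F))"
proof -
  let ?M = "reps n (rep_map_of n F)"
  have 1: "family_of n F \<subseteq> (Pow ?M - {{}})"
  proof
    fix S assume "S \<in> family_of n F"
    then obtain I where I: "I \<in> F" "S = I \<inter> ?M" by (auto simp: family_of_def)
    obtain j where j: "j \<in> I" using F I by (auto simp: Pow_def)
    have "I \<in> (Pow {1..n} - {{}})" using F I(1) by blast
    then have "I \<subseteq> {1..n}" by (simp add: Pow_def)
    then have jn: "j \<in> {1..n}" using j by blast
    have "(rep_map_of n F) j \<in> S" using mem_iff_rep_mem[OF I(1) jn] j I(2) by simp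
    then show "S \<in> (Pow ?M - {{}})" using I by (auto simp: sep_families_def)
  qed
  have 2: "separating ?M (family_of n F)"
    unfolding separating_def
  proof (intro conjI ballI impI)
    fix p assume p: "p \<in> ?M"
    then have pn: "p \<in> {1..n}" and gp: "(rep_map_of n F) p = p" by (auto simp: reps_def)
    have "(rep_map_of n F) p \<noteq> 0" using gp pn by simp
    then have "column F p \<noteq> {}" by (auto simp: rep_map_of_def split: if_splits)
    then obtain I where I: "I \<in> F" "p \<in> I" by (auto simp: column_def)
    then have "p \<in> I \<inter> ?M" using p by blast
    moreover have "I \<inter> ?M \<in> family_of n F" using I by (auto simp: family_of_def)
    ultimately show "\<exists>S\<in>family_of n F. p \<in> S" by blast
  next
    fix p q assume p: "p \<in> ?M" and q: "q \<in> ?M" and pq: "p \<noteq> q"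
    have pn: "p \<in> {1..n}" and gp: "(rep_map_of n F) p = p" using p by (auto simp: reps_def)
    have qn: "q \<in> {1..n}" and gq: "(rep_map_of n F) q = q" using q by (auto simp: reps_def)
    have "(rep_map_of n F) p \<noteq> 0" using gp pn by simp
    then have ne: "column F p \<noteq> {}" by (auto simp: rep_map_of_def split: if_splits)
    have "column F p \<noteq> column F q" using rep_map_of_eq_iff[OF pn qn ne] gp gq pq by simp
    then obtain I where I: "I \<in> F" "(p \<in> I) \<noteq> (q \<in> I)" unfolding column_def by blast
    have "(p \<in> I \<inter> ?M) \<noteq> (q \<in> I \<inter> ?M)" using I(2) p q by simp
    moreover have "I \<inter> ?M \<in> family_of n F" using I by (auto simp: family_of_def)
    ultimately show "\<exists>S\<in>family_of n F. (p \<in> S) \<noteq> (q \<in> S)"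
      by (rule bexI[where P="\<lambda>S. (p \<in> S) \<noteq> (q \<in> S)"])
  qed
  show ?thesis using 1 2 by (simp add: sep_families_def)
qed

lemma expand_family_of: "expand n (rep_map_of n F) ` family_of n F = F"
proof -
  have "expand n (rep_map_of n F) ` family_of n F = (\<lambda>I. expand n (rep_map_of n F) (I \<inter> reps n (rep_map_of n F))) ` F" by (simp add: family_of_def image_image)
  also have "\<dots> = F" using expand_rep_Int by simp
  finally show ?thesis .
qed

end

lemma bij_betw_expand_family:
  "bij_betw (\<lambda>(g, G). expand n g ` G) (Sigma (rep_maps n) (\<lambda>g. sep_families (reps n g))) (Pow (Pow {1..n} - {{}}))"
proof (rule bij_betw_byWitness[where f'="\<lambda>F. (rep_map_of n F, family_of n F)"])
  show "\<forall>a\<in>Sigma (rep_maps n) (\<lambda>g. sep_families (reps n g)). (\<lambda>F. (rep_map_of n F, family_of n F)) ((\<lambda>(g, G). expand n g ` G) a) = a"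
  proof
    fix a assume "a \<in> Sigma (rep_maps n) (\<lambda>g. sep_families (reps n g))"
    then obtain g G where a: "a = (g, G)" "g \<in> rep_maps n" "G \<in> sep_families (reps n g)" by blast
    then show "(\<lambda>F. (rep_map_of n F, family_of n F)) ((\<lambda>(g, G). expand n g ` G) a) = a"
      using rep_map_of_expand[OF a(2,3)] family_of_expand[OF a(2,3)] by simp
  qed
  show "\<forall>a'\<in>Pow (Pow {1..n} - {{}}). (\<lambda>(g, G). expand n g ` G) ((\<lambda>F. (rep_map_of n F, family_of n F)) a') = a'"
    using expand_family_of by simp
  show "(\<lambda>(g, G). expand n g ` G) ` Sigma (rep_maps n) (\<lambda>g. sep_families (reps n g)) \<subseteq> Pow (Pow {1..n} - {{}})"
  proof (rule image_subsetI)
    fix a assume "a \<in> Sigma (rep_maps n) (\<lambda>g. sep_families (reps n g))"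
    then obtain g G where a: "a = (g, G)" "g \<in> rep_maps n" "G \<in> sep_families (reps n g)" by blast
    then show "(\<lambda>(g, G). expand n g ` G) a \<in> Pow (Pow {1..n} - {{}})" using expand_family_in[OF a(2,3)] by simp
  qed
  show "(\<lambda>F. (rep_map_of n F, family_of n F)) ` Pow (Pow {1..n} - {{}}) \<subseteq> Sigma (rep_maps n) (\<lambda>g. sep_families (reps n g))"
  proof (rule image_subsetI)
    fix F assume F: "F \<in> Pow (Pow {1..n} - {{}})"
    show "(rep_map_of n F, family_of n F) \<in> Sigma (rep_maps n) (\<lambda>g. sep_families (reps n g))" using rep_map_of_rep_maps[OF PowD[OF F]] family_of_sep_families[OF PowD[OF F]] by blast
  qed
qed

context
  fixes n g G
  assumes g: "g \<in> rep_maps n" and G: "G \<in> sep_families (reps n g)"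
begin

lemma zero_sum_space_expand_coords:
  "zero_sum_space {1..n} (expand n g ` G \<union> (\<lambda>t. {t}) ` ({1..n} - reps n g)) = zero_sum_space (reps n g) G"
proof -
  have sum_expand: "(\<Sum>j\<in>expand n g S. x j) = (\<Sum>j\<in>S. x j)"
    if "S \<in> G" "x \<in> supported_on (reps n g)" for S x
  proof -
    have "(\<Sum>j\<in>expand n g S. x j) = (\<Sum>j\<in>expand n g S \<inter> reps n g. x j)"
      using that(2) by (intro sum.mono_neutral_right) (auto simp: expand_def supported_on_def)
    then show ?thesis using expand_Int_reps sep_family_subset[OF g G that(1)] by simp
  qed
  have "supported_on {1..n} \<inter> \<Inter>(sum_kernel ` (\<lambda>t. {t}) ` ({1..n} - reps n g)) = supported_on (reps n g)"
    (is "?L = _")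
  proof (intro equalityI subsetI)
    fix x assume x: "x \<in> ?L"
    have "x j = 0" if "j \<notin> reps n g" for j
    proof (cases "j \<in> {1..n}")
      case True
      then have "x \<in> sum_kernel {j}" using x that by blast
      then show ?thesis by (simp add: sum_kernel_def)
    qed (use x in \<open>simp add: supported_on_def\<close>)
    then show "x \<in> supported_on (reps n g)" by (simp add: supported_on_def)
  next
    fix x assume "x \<in> supported_on (reps n g)"
    then show "x \<in> ?L" using reps_subset[of n g] by (auto simp: supported_on_def sum_kernel_def)
  qed
  moreover have "zero_sum_space {1..n} (expand n g ` G \<union> (\<lambda>t. {t}) ` ({1..n} - reps n g)) =
      ?L \<inter> \<Inter>(sum_kernel ` expand n g ` G)"
    by (auto simp: zero_sum_space_def)
  moreover have "supported_on (reps n g) \<inter> \<Inter>(sum_kernel ` expand n g ` G) = zero_sum_space (reps n g) G"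
    using sum_expand by (auto simp: zero_sum_space_def sum_kernel_def)
  ultimately show ?thesis by simp
qed

lemma dim_zero_sum_space_glue:
  assumes "T \<subseteq> {1..n} - reps n g"
  shows "fun_vs.dim (zero_sum_space {1..n} (expand n g ` G \<union> (\<lambda>t. {t}) ` T)) + card T =
    fun_vs.dim (zero_sum_space {1..n} (expand n g ` G))"
proof -
  have fin: "finite T" using assms finite_subset by blast
  have fG: "finite (expand n g ` G)"
    by (rule finite_subset[of _ "Pow {1..n}"]) (use expand_family_in[OF g G] in auto)
  show ?thesis
    using fin assms
  proof (induction T rule: finite_induct)
    case (insert t T)
    let ?F = "expand n g ` G \<union> (\<lambda>t. {t}) ` T"
    have t: "t \<in> {1..n}" "g t \<noteq> t" using insert.prems by (auto simp: reps_def)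
    \<comment> \<open>coordinate t is glued to its representative g t, or free if g t = 0\<close>
    define w where "w = unit_vec t - (if g t = 0 then 0 else unit_vec (g t))"
    have gt: "g t \<in> reps n g" "g t \<in> {1..n}" if "g t \<noteq> 0"
      using rep_maps_inside(1)[OF g t(1) that] reps_subset[of n g] by auto
    have "w \<in> sum_kernel (expand n g S)" if "S \<in> G" for S
    proof -
      have S: "S \<subseteq> reps n g" "finite (expand n g S)"
        using sep_family_subset[OF g G that] by (auto simp: expand_def)
      have "t \<in> expand n g S \<longleftrightarrow> g t \<in> S" using t by (simp add: expand_def)
      moreover have "g t \<in> expand n g S \<longleftrightarrow> g t \<in> S" if "g t \<noteq> 0"
        using gt[OF that] by (auto simp: expand_def reps_def)
      moreover have "g t \<notin> S" if "g t = 0" using that S reps_subset by fastforce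
      ultimately show ?thesis
        using S(2) by (auto simp: w_def sum_kernel_def sum_subtractf sum_unit_vec)
    qed
    moreover have "w \<in> sum_kernel {t'}" if "t' \<in> T" for t'
      using that insert.hyps(2) insert.prems gt by (auto simp: w_def sum_kernel_def unit_vec_def)
    moreover have "w \<in> supported_on {1..n}"
      using t gt by (auto simp: w_def supported_on_def unit_vec_def)
    moreover have "w \<notin> sum_kernel {t}" using t by (simp add: w_def sum_kernel_def unit_vec_def)
    ultimately have "\<not> zero_sum_space {1..n} ?F \<subseteq> sum_kernel {t}"
      by (auto simp: zero_sum_space_def)
    then have "fun_vs.dim (zero_sum_space {1..n} (insert {t} ?F)) + 1 = fun_vs.dim (zero_sum_space {1..n} ?F)"
      using dim_zero_sum_space_insert[of "{1..n}" ?F "{t}"] fG insert.hyps(1) by simp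
    then show ?case using insert by simp
  qed simp
qed

lemma dim_zero_sum_space_expand:
  "fun_vs.dim (zero_sum_space {1..n} (expand n g ` G)) =
    fun_vs.dim (zero_sum_space (reps n g) G) + (n - card (reps n g))"
proof -
  have "card ({1..n} - reps n g) = n - card (reps n g)"
    using card_Diff_subset[OF finite_reps reps_subset, of n g] by simp
  then show ?thesis
    using dim_zero_sum_space_glue[of "{1..n} - reps n g"] zero_sum_space_expand_coords by simp
qed

end

lemma resonance_eq_image: "resonance n = hyp n ` (Pow {1..n} - {{}})"
  by (auto simp: resonance_def)

lemma hyp_eq: "hyp n I = Rn n \<inter> sum_kernel I"
  by (auto simp: hyp_def sum_kernel_def)

lemma inj_on_hyp: "inj_on (hyp n) (Pow {1..n} - {{}})"
proof (rule inj_onI)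
  fix I J assume I: "I \<in> Pow {1..n} - {{}}" and J: "J \<in> Pow {1..n} - {{}}" and eq: "hyp n I = hyp n J"
  have mem: "unit_vec p \<in> hyp n K \<longleftrightarrow> p \<notin> K" if "p \<in> {1..n}" "K \<subseteq> {1..n}" for p K
    using that finite_subset[of K "{1..n}"] unit_vec_in_supported_on[of p "{1..n}"]
    by (auto simp: hyp_eq Rn_eq_supported_on unit_vec_in_sum_kernel)
  show "I = J"
  proof (rule set_eqI)
    fix p
    show "p \<in> I \<longleftrightarrow> p \<in> J"
    proof (cases "p \<in> {1..n}")
      case True
      then show ?thesis using mem[OF True, of I] mem[OF True, of J] I J eq by auto
    qed (use I J in auto)
  qed
qed

lemma Rn_Int_hyps: "Rn n \<inter> \<Inter>(hyp n ` F) = zero_sum_space {1..n} F"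
  by (auto simp: hyp_eq zero_sum_space_def Rn_eq_supported_on)

lemma rk_resonance: "rk n (resonance n) = n"
proof -
  have "Rn n \<inter> \<Inter>(resonance n) \<subseteq> {0}"
  proof
    fix x assume x: "x \<in> Rn n \<inter> \<Inter>(resonance n)"
    have "x j = 0" for j
    proof (cases "j \<in> {1..n}")
      case True
      then have "hyp n {j} \<in> resonance n" by (auto simp: resonance_def)
      then show ?thesis using x by (auto simp: hyp_def)
    qed (use x in \<open>auto simp: Rn_def\<close>)
    then show "x \<in> {0}" by (auto simp: zero_fun_def)
  qed
  moreover have "fun_vs.dim {0} = 0"
    using fun_vs.dim_eq_card[of "{}" "{0}"] fun_vs.span_insert_0[of "{}"] fun_vs.independent_empty by simp
  ultimately have "fun_vs.dim (Rn n \<inter> \<Inter>(resonance n)) = 0"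
    using dim_subset_supported_on[of "{}" "Rn n \<inter> \<Inter>(resonance n)" "{0}"]
    by (auto simp: supported_on_def zero_fun_def)
  then show ?thesis by (simp add: rk_def)
qed

lemma coeff_char_poly_resonance:
  "coeff (char_poly n (resonance n)) d =
    (\<Sum>F\<in>Pow (Pow {1..n} - {{}}). if fun_vs.dim (zero_sum_space {1..n} F) = d then (-1) ^ card F else 0)"
proof -
  have coeff_signed: "coeff ((-1) ^ k * p) j = (-1) ^ k * coeff p j" for k j and p :: "int poly"
    by (induction k) simp_all
  have "coeff (char_poly n (resonance n)) d =
      (\<Sum>S\<in>Pow (resonance n). if fun_vs.dim (Rn n \<inter> \<Inter>S) = d then (-1) ^ card S else 0)"
    unfolding char_poly_def coeff_sum coeff_signed coeff_monom rk_resonance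
  proof (intro sum.cong refl)
    fix S assume "S \<in> Pow (resonance n)"
    have "fun_vs.dim (Rn n \<inter> \<Inter>S) \<le> n"
      using dim_le_card_support[of "{1..n}"] by (simp add: Rn_eq_supported_on)
    then show "(-1) ^ card S * (if n - rk n S = d then 1 else 0) =
        (if fun_vs.dim (Rn n \<inter> \<Inter>S) = d then (-1) ^ card S else (0::int))"
      by (simp add: rk_def)
  qed
  also have "\<dots> = (\<Sum>F\<in>Pow (Pow {1..n} - {{}}).
      if fun_vs.dim (zero_sum_space {1..n} F) = d then (-1) ^ card F else 0)"
  proof -
    have "bij_betw (image (hyp n)) (Pow (Pow {1..n} - {{}})) (Pow (resonance n))"
      unfolding bij_betw_def using inj_on_image_Pow[OF inj_on_hyp]
      by (simp add: image_Pow_surj resonance_eq_image)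
    moreover have "card (hyp n ` F) = card F" if "F \<in> Pow (Pow {1..n} - {{}})" for F
      using that by (intro card_image inj_on_subset[OF inj_on_hyp]) auto
    ultimately show ?thesis
      by (simp add: sum.reindex_bij_betw[symmetric] Rn_Int_hyps) (intro sum.cong refl, auto)
  qed
  finally show ?thesis .
qed

lemma coeff_char_poly_resonance_Stirling:
  assumes "i \<le> n"
  shows "coeff (char_poly n (resonance n)) (n - i) =
    (\<Sum>k\<le>n. int (Stirling (Suc n) (Suc k)) * sep_sum i {1..k})"
proof -
  have fin: "finite (sep_families (reps n g))" for g by (simp add: finite_sep_families finite_reps)
  have inner: "(\<Sum>G\<in>sep_families (reps n g). if fun_vs.dim (zero_sum_space {1..n} (expand n g ` G)) = n - i
      then (-1) ^ card (expand n g ` G) else 0) = sep_sum i {1..card (reps n g)}"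
    if g: "g \<in> rep_maps n" for g
  proof -
    have "(\<Sum>G\<in>sep_families (reps n g). if fun_vs.dim (zero_sum_space {1..n} (expand n g ` G)) = n - i
        then (-1) ^ card (expand n g ` G) else 0) = sep_sum i (reps n g)"
      unfolding sep_sum_def
    proof (intro sum.cong refl)
      fix G assume G: "G \<in> sep_families (reps n g)"
      have "card (reps n g) \<le> n" using card_mono[OF _ reps_subset, of n g] by simp
      moreover have "fun_vs.dim (zero_sum_space (reps n g) G) \<le> card (reps n g)"
        using dim_le_card_support[OF finite_reps] by (auto simp: zero_sum_space_def)
      ultimately have "fun_vs.dim (zero_sum_space {1..n} (expand n g ` G)) = n - i \<longleftrightarrow>
          fun_vs.dim (zero_sum_space (reps n g) G) + i = card (reps n g)"
        using dim_zero_sum_space_expand[OF g G] assms by linarith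
      then show "(if fun_vs.dim (zero_sum_space {1..n} (expand n g ` G)) = n - i
          then (-1) ^ card (expand n g ` G) else 0) =
        (if fun_vs.dim (zero_sum_space (reps n g) G) + i = card (reps n g) then (-1) ^ card G else 0)"
        using card_expand_family[OF g G] by simp
    qed
    then show ?thesis using sep_sum_card_eq[OF finite_reps] by simp
  qed
  have "coeff (char_poly n (resonance n)) (n - i) =
      (\<Sum>(g, G)\<in>Sigma (rep_maps n) (\<lambda>g. sep_families (reps n g)).
        if fun_vs.dim (zero_sum_space {1..n} (expand n g ` G)) = n - i then (-1) ^ card (expand n g ` G) else 0)"
    unfolding coeff_char_poly_resonance
    by (subst sum.reindex_bij_betw[OF bij_betw_expand_family, symmetric]) (simp add: case_prod_unfold cong: if_cong)
  also have "\<dots> = (\<Sum>g\<in>rep_maps n. \<Sum>G\<in>sep_families (reps n g).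
      if fun_vs.dim (zero_sum_space {1..n} (expand n g ` G)) = n - i then (-1) ^ card (expand n g ` G) else 0)"
    by (rule sum.Sigma[symmetric]) (simp_all add: finite_rep_maps fin)
  also have "\<dots> = (\<Sum>g\<in>rep_maps n. sep_sum i {1..card (reps n g)})"
    using inner by (intro sum.cong refl)
  also have "\<dots> = (\<Sum>k\<le>n. int (Stirling (Suc n) (Suc k)) * sep_sum i {1..k})"
    by (rule sum_rep_maps_Stirling)
  finally show ?thesis .
qed

definition resonance_coeff :: "nat \<Rightarrow> nat \<Rightarrow> nat" where
  "resonance_coeff i k = nat \<bar>sep_sum i {1..<k}\<bar>"

lemma int_resonance_coeff: "int (resonance_coeff i k) = (-1) ^ i * sep_sum i {1..<k}"
proof -
  have "0 \<le> (-1) ^ i * sep_sum i {1..<k}" by (rule sep_sum_sign) simp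
  then show ?thesis by (cases "even i") (simp_all add: resonance_coeff_def)
qed

lemma resonance_coeff_pos:
  assumes "i + 1 \<le> k" "k \<le> 2 ^ i"
  shows "0 < resonance_coeff i k"
proof -
  have "{1..<k} = {1..k - 1}" using assms(1) by auto
  moreover have "sep_sum i {1..k - 1} \<noteq> 0" using assms by (intro sep_sum_neq_0_range) auto
  ultimately show ?thesis by (simp add: resonance_coeff_def)
qed

lemma resonance_coeff_eq_0:
  assumes "1 \<le> k" "k \<le> i \<or> 2 ^ i < k"
  shows "resonance_coeff i k = 0"
proof -
  have "{1..<k} = {1..k - 1}" using assms(1) by auto
  moreover have "sep_sum i {1..k - 1} = 0"
    using assms(2) sep_sum_eq_0[of "{1..k - 1}" i] sep_sum_eq_0_large[of i "k - 1"] assms(1) by auto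
  ultimately show ?thesis by (simp add: resonance_coeff_def)
qed

lemma resonance_coeff_bound:
  assumes "1 \<le> k"
  shows "real (resonance_coeff i k) \<le> real ((2 ^ i - 1) choose (k - 1)) * fact (k - 1) / fact i"
proof -
  have "{1..<k} = {1..k - 1}" using assms by auto
  then show ?thesis using abs_sep_sum_bound[of i "k - 1"] by (simp add: resonance_coeff_def)
qed

lemma betti_resonance:
  "betti n (resonance n) i = (\<Sum>k = i + 1..2 ^ i. resonance_coeff i k * Stirling (n + 1) k)"
proof (cases "i \<le> n")
  case False
  then show ?thesis by (simp add: betti_def)
next
  case True
  let ?c = "resonance_coeff i"
  have "(-1) ^ i * coeff (char_poly n (resonance n)) (n - i) =
      (\<Sum>k\<le>n. int (Stirling (Suc n) (Suc k)) * ((-1) ^ i * sep_sum i {1..k}))"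
    by (simp add: coeff_char_poly_resonance_Stirling[OF True] sum_distrib_left algebra_simps)
  also have "\<dots> = int (\<Sum>k\<le>n. Stirling (Suc n) (Suc k) * ?c (Suc k))"
    by (simp add: int_resonance_coeff atLeastLessThanSuc_atLeastAtMost)
  finally have "\<bar>(-1) ^ i * coeff (char_poly n (resonance n)) (n - i)\<bar> =
      int (\<Sum>k\<le>n. Stirling (Suc n) (Suc k) * ?c (Suc k))"
    by (simp only: abs_of_nat)
  moreover have "\<bar>(-1::int) ^ i\<bar> = 1" by simp
  ultimately have "nat \<bar>coeff (char_poly n (resonance n)) (n - i)\<bar> = (\<Sum>k\<le>n. Stirling (Suc n) (Suc k) * ?c (Suc k))"
    by (simp only: abs_mult mult_1 nat_int)
  also have "\<dots> = (\<Sum>k = 1..n + 1. ?c k * Stirling (n + 1) k)"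
    by (simp add: sum.atLeast1_atMost_eq lessThan_Suc_atMost[symmetric] mult.commute)
  also have "\<dots> = (\<Sum>k = i + 1..2 ^ i. ?c k * Stirling (n + 1) k)"
    \<comment> \<open>outside both ranges either the Stirling number or the coefficient vanishes\<close>
    by (rule sum.same_carrierI[where C = "{1..max (n + 1) (2 ^ i)}"])
      (auto simp: resonance_coeff_eq_0)
  finally show ?thesis using True by (simp add: betti_def)
qed

theorem theorem1p2:
  shows "\<exists>c :: nat \<Rightarrow> nat \<Rightarrow> nat.
    (\<forall>i k. i + 1 \<le> k \<and> k \<le> 2 ^ i \<longrightarrow> 0 < c i k) \<and>
    (\<forall>i n. 1 \<le> n \<longrightarrow>
       betti n (resonance n) i = (\<Sum>k = i + 1..2 ^ i. c i k * Stirling (n + 1) k)) \<and>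
    (\<forall>i k. i + 1 \<le> k \<and> k \<le> 2 ^ i \<longrightarrow>
       real (c i k) \<le> real ((2 ^ i - 1) choose (k - 1)) * fact (k - 1) / fact i)"
proof (intro exI[of _ resonance_coeff] conjI allI impI)
  fix i k :: nat assume "i + 1 \<le> k \<and> k \<le> 2 ^ i"
  then show "0 < resonance_coeff i k" by (intro resonance_coeff_pos) auto
next
  fix i n :: nat
  show "betti n (resonance n) i = (\<Sum>k = i + 1..2 ^ i. resonance_coeff i k * Stirling (n + 1) k)"
    by (rule betti_resonance)
next
  fix i k :: nat assume "i + 1 \<le> k \<and> k \<le> 2 ^ i"
  then show "real (resonance_coeff i k) \<le> real ((2 ^ i - 1) choose (k - 1)) * fact (k - 1) / fact i"
    by (intro resonance_coeff_bound) auto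
qed

end
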